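(* Let $\mathfrak{g}$ be a finite-dimensional simple Lie algebra over $\mathbb{C}$ with root system $\Delta$, simple roots $\Pi=\{\alpha_1,\dots,\alpha_n\}$, Weyl group $W$ with longest element $w_0$, and suppose the fundamental weight $\varpi_i$ is minuscule. Let $\Lambda_{\varpi_i}$ be the set of weights of the irreducible $\mathfrak{g}$-module of highest weight $\varpi_i$, and let $w_0^i$ be the longest element of the subgroup of $W$ generated by $s_{\alpha_j}$, $j\neq i$. Then there is an isomorphism of complemented posets $(\Lambda_{\varpi_i},w_0)\cong J([\alpha_i^\vee],w_0^i)$, where $[\alpha_i^\vee]$ is taken in the dual root system $\Delta^\vee$.
   Context: $\varpi_i$ is minuscule if $W$ acts transitively on $\Lambda_{\varpi_i}$. $\Lambda_{\varpi_i}$ is ordered by $\mu\le\nu$ iff $\nu-\mu$ is a nonnegative integer combination of simple roots; $w_0$ acts on it as an order-reversing involution. In $\Delta^\vee$ with positive system $(\Delta^\vee)^+$ and simple coroots $\alpha_j^\vee=2\alpha_j/(\alpha_j,\alpha_j)$, $[\alpha_i^\vee]=\{\beta\in(\Delta^\vee)^+:\text{coefficient of }\alpha_i^\vee\text{ in }\beta\text{ is }1\}$ with the order $\beta\le\beta'$ iff $\beta'-\beta$ is a nonnegative integer combination of simple coroots; $w_0^i$ (acting via the Weyl group of $\Delta^\vee$, identified with $W$) preserves $[\alpha_i^\vee]$ and acts as an order-reversing involution. A complemented poset is a pair $(P,c)$ with $c$ an order-reversing involution of $P$; $J(P,c)$ denotes the poset of lower ideals of $P$ under inclusion with the order-reversing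 involution $I\mapsto P\setminus c(I)$. An isomorphism of complemented posets is an order isomorphism intertwining the involutions. *)

theory Defs
  imports "HOL-Analysis.Analysis"
begin

text \<open>Abstract (real, Euclidean) root systems; the root system of a complex simple
Lie algebra is an irreducible reduced crystallographic root system.\<close>

definition refl :: "'a::real_inner \<Rightarrow> 'a \<Rightarrow> 'a" where
  "refl a v = v - (2 * (v \<bullet> a) / (a \<bullet> a)) *\<^sub>R a"

definition coroot :: "'a::real_inner \<Rightarrow> 'a" where
  "coroot a = (2 / (a \<bullet> a)) *\<^sub>R a"

definition root_system :: "'a::euclidean_space set \<Rightarrow> bool" where
  "root_system R \<longleftrightarrow> finite R \<and> 0 \<notin> R \<and> span R = UNIV
     \<and> (\<forall>a\<in>R. refl a ` R \<subseteq> R)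
     \<and> (\<forall>a\<in>R. \<forall>b\<in>R. 2 * (b \<bullet> a) / (a \<bullet> a) \<in> \<int>)
     \<and> (\<forall>a\<in>R. \<forall>c::real. c *\<^sub>R a \<in> R \<longrightarrow> c = 1 \<or> c = -1)"

definition irreducible_rs :: "'a::euclidean_space set \<Rightarrow> bool" where
  "irreducible_rs R \<longleftrightarrow> \<not> (\<exists>A B. A \<noteq> {} \<and> B \<noteq> {} \<and> A \<union> B = R \<and> A \<inter> B = {}
       \<and> (\<forall>a\<in>A. \<forall>b\<in>B. a \<bullet> b = 0))"

definition nn_comb :: "'a::real_vector set \<Rightarrow> 'a \<Rightarrow> bool" where
  "nn_comb S v \<longleftrightarrow> (\<exists>c::'a \<Rightarrow> nat. v = (\<Sum>b\<in>S. of_nat (c b) *\<^sub>R b))"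

definition is_base :: "'a::euclidean_space set \<Rightarrow> 'a set \<Rightarrow> bool" where
  "is_base R Sm \<longleftrightarrow> Sm \<subseteq> R \<and> independent Sm \<and> (\<forall>a\<in>R. nn_comb Sm a \<or> nn_comb Sm (- a))"

definition pos_roots :: "'a::euclidean_space set \<Rightarrow> 'a set \<Rightarrow> 'a set" where
  "pos_roots R Sm = {a \<in> R. nn_comb Sm a}"

fun word_map :: "'a::real_inner list \<Rightarrow> 'a \<Rightarrow> 'a" where
  "word_map [] = id"
| "word_map (a # as) = refl a \<circ> word_map as"

definition gen_group :: "'a::real_inner set \<Rightarrow> ('a \<Rightarrow> 'a) set" where
  "gen_group S = {word_map ws | ws. set ws \<subseteq> S}"

definition weyl :: "'a::real_inner set \<Rightarrow> ('a \<Rightarrow> 'a) set" where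
  "weyl R = gen_group R"

definition word_len :: "'a::real_inner set \<Rightarrow> ('a \<Rightarrow> 'a) \<Rightarrow> nat" where
  "word_len S w = (LEAST k. \<exists>ws. set ws \<subseteq> S \<and> length ws = k \<and> word_map ws = w)"

definition longest_elt :: "('a::real_inner \<Rightarrow> 'a) set \<Rightarrow> 'a set \<Rightarrow> ('a \<Rightarrow> 'a)" where
  "longest_elt G S = (THE w. w \<in> G \<and> (\<forall>v\<in>G. word_len S v \<le> word_len S w))"

definition w0 :: "'a::euclidean_space set \<Rightarrow> 'a set \<Rightarrow> ('a \<Rightarrow> 'a)" where
  "w0 R Sm = longest_elt (weyl R) Sm"

definition w0i :: "'a::euclidean_space set \<Rightarrow> 'a \<Rightarrow> ('a \<Rightarrow> 'a)" where
  "w0i Sm ai = longest_elt (gen_group (Sm - {ai})) (Sm - {ai})"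

definition fund_weight :: "'a::euclidean_space set \<Rightarrow> 'a \<Rightarrow> 'a" where
  "fund_weight Sm ai = (THE v. \<forall>b\<in>Sm. 2 * (v \<bullet> b) / (b \<bullet> b) = (if b = ai then 1 else 0))"

definition root_le :: "'a::real_vector set \<Rightarrow> 'a \<Rightarrow> 'a \<Rightarrow> bool" where
  "root_le Sm mu nu \<longleftrightarrow> nn_comb Sm (nu - mu)"

text \<open>Set of weights of the irreducible module of (dominant integral) highest weight lam:
  mu is a weight iff w mu \<le> lam for all w in W (Humphreys, Sect. 21.3).\<close>
definition weights_irrep :: "'a::euclidean_space set \<Rightarrow> 'a set \<Rightarrow> 'a \<Rightarrow> 'a set" where
  "weights_irrep R Sm lam = {mu. \<forall>w\<in>weyl R. root_le Sm (w mu) lam}"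

definition minuscule :: "'a::euclidean_space set \<Rightarrow> 'a set \<Rightarrow> 'a \<Rightarrow> bool" where
  "minuscule R Sm ai \<longleftrightarrow>
     (\<forall>mu\<in>weights_irrep R Sm (fund_weight Sm ai). \<forall>nu\<in>weights_irrep R Sm (fund_weight Sm ai).
        \<exists>w\<in>weyl R. w mu = nu)"

text \<open>[alpha_i^vee]: positive coroots whose coefficient of alpha_i^vee (w.r.t. the simple
  coroots) equals 1\<close>
definition coroot_class :: "'a::euclidean_space set \<Rightarrow> 'a set \<Rightarrow> 'a \<Rightarrow> 'a set" where
  "coroot_class R Sm ai =
     {b \<in> coroot ` pos_roots R Sm. representation (coroot ` Sm) b (coroot ai) = 1}"

definition lower_ideals :: "'b set \<Rightarrow> ('b \<Rightarrow> 'b \<Rightarrow> bool) \<Rightarrow> 'b set set" where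
  "lower_ideals P le = {I. I \<subseteq> P \<and> (\<forall>x\<in>I. \<forall>y\<in>P. le y x \<longrightarrow> y \<in> I)}"

text \<open>J(P,c): lower ideals with involution I \<mapsto> P - c(I)\<close>
definition ideal_compl :: "'b set \<Rightarrow> ('b \<Rightarrow> 'b) \<Rightarrow> 'b set \<Rightarrow> 'b set" where
  "ideal_compl P c I = P - c ` I"

definition compl_poset_iso ::
  "'b set \<Rightarrow> ('b \<Rightarrow> 'b \<Rightarrow> bool) \<Rightarrow> ('b \<Rightarrow> 'b) \<Rightarrow>
   'c set \<Rightarrow> ('c \<Rightarrow> 'c \<Rightarrow> bool) \<Rightarrow> ('c \<Rightarrow> 'c) \<Rightarrow> ('b \<Rightarrow> 'c) \<Rightarrow> bool" where
  "compl_poset_iso P leP c Q leQ d f \<longleftrightarrow> bij_betw f P Q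
     \<and> (\<forall>x\<in>P. \<forall>y\<in>P. leP x y \<longleftrightarrow> leQ (f x) (f y))
     \<and> (\<forall>x\<in>P. f (c x) = d (f x))"

end

(*
  For a weight \<mu> in the orbit \<Lambda> = W \<omega> let w be the unique element of W with w \<omega> = \<mu> that keeps
  the simple roots other than \<alpha>_i positive. Its inversions are positive roots with positive
  \<alpha>_i-coefficient, and since \<omega> is minuscule (\<langle>\<omega>, \<beta>^\<or>\<rangle> \<in> {-1, 0, 1} for every root \<beta>) their
  coroots lie in [\<alpha>_i^\<or>]; together they form a lower ideal F(\<mu>). A simple reflection changes \<mu>
  by \<plusminus>\<alpha> and F(\<mu>) by exactly one coroot, and if \<gamma> is a minimal element of [\<alpha>_i^\<or>] outside
  F(\<mu>), then w sends the root \<gamma>^\<or> to a simple root \<alpha>, whose reflection adds \<gamma> to F(\<mu>). Induction on the size of ideals then shows that F is an order-reversing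
  bijection from \<Lambda> onto J([\<alpha>_i^\<or>]). Composing with the order-reversing involution w_0 gives
  the isomorphism \<mu> \<mapsto> F(w_0 \<mu>); the element for w_0 \<mu> is w_0 w w_0^i, whence
  F(w_0 \<mu>) = [\<alpha>_i^\<or>] - w_0^i F(\<mu>), which is the complementation of J([\<alpha>_i^\<or>], w_0^i).
*)

theory Submission
  imports Defs
begin

lemma inner_coroot: "x \<bullet> coroot a = 2 * (x \<bullet> a) / (a \<bullet> a)"
  by (simp add: coroot_def)

lemma refl_eq_coroot_pairing: "refl a v = v - (v \<bullet> coroot a) *\<^sub>R a"
  by (simp add: refl_def inner_coroot)

lemma refl_eq_pairing_coroot: "refl a v = v - (v \<bullet> a) *\<^sub>R coroot a"
  by (simp add: refl_def coroot_def)

lemma refl_zero [simp]: "refl 0 v = v"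
  by (simp add: refl_def)

lemma refl_refl [simp]: "refl a (refl a v) = (v::'a::real_inner)"
proof (cases "a = 0")
  case False
  then have "a \<bullet> a \<noteq> 0" by simp
  then show ?thesis by (simp add: refl_def inner_diff_left algebra_simps field_simps)
qed simp

lemma mem_refl_image_iff: "x \<in> refl a ` X \<longleftrightarrow> refl a x \<in> (X::'a::real_inner set)"
  by (metis image_iff refl_refl)

lemma refl_self: "refl a a = - (a::'a::real_inner)"
  by (cases "a = 0") (simp_all add: refl_def scaleR_2)

lemma refl_uminus: "refl a (- v) = - refl a (v::'a::real_inner)"
  by (simp add: refl_def)

lemma orthogonal_transformation_refl: "orthogonal_transformation (refl (a::'a::real_inner))"
  unfolding orthogonal_transformation_def
proof
  show "linear (refl a)"
    by (rule linearI) (simp_all add: refl_def inner_add_left add_divide_distrib algebra_simps)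
  show "\<forall>x y. refl a x \<bullet> refl a y = x \<bullet> y"
  proof (cases "a = 0")
    case False
    then have "a \<bullet> a \<noteq> 0" by simp
    then show ?thesis
      by (simp add: refl_def inner_diff_left inner_diff_right algebra_simps field_simps inner_commute)
  qed simp
qed

lemma refl_conj:
  assumes "orthogonal_transformation w"
  shows "refl (w a) (w x) = w (refl a x)"
  using assms by (simp add: refl_def orthogonal_transformation_def linear_diff linear_scale)

lemma coroot_conj:
  assumes "orthogonal_transformation w"
  shows "coroot (w a) = w (coroot a)"
  using assms by (simp add: coroot_def orthogonal_transformation_def linear_scale)

lemma coroot_coroot: "a \<noteq> 0 \<Longrightarrow> coroot (coroot a) = (a::'a::real_inner)"
  by (simp add: coroot_def field_simps)

lemma coroot_uminus: "coroot (- a) = - coroot (a::'a::real_inner)"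
  by (simp add: coroot_def)

lemma coroot_eq_0_iff: "coroot a = 0 \<longleftrightarrow> (a::'a::real_inner) = 0"
  by (simp add: coroot_def)

lemma inj_on_coroot: "0 \<notin> A \<Longrightarrow> inj_on coroot (A::'a::real_inner set)"
  by (rule inj_onI) (metis coroot_coroot)

lemma word_map_append: "word_map (xs @ ys) = word_map xs \<circ> word_map ys"
  by (induction xs) auto

lemma word_map_rev_cancel: "word_map (rev ws) (word_map ws x) = x"
  by (induction ws arbitrary: x) (auto simp: word_map_append)

lemma word_map_cancel_rev: "word_map ws (word_map (rev ws) x) = x"
  using word_map_rev_cancel[of "rev ws" x] by simp

lemma orthogonal_transformation_word_map: "orthogonal_transformation (word_map ws)"
proof (induction ws)
  case Nil
  then show ?case by (simp add: id_def)
next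
  case (Cons a ws)
  then show ?case
    by (simp only: word_map.simps orthogonal_transformation_compose orthogonal_transformation_refl)
qed

lemma gen_groupI: "set ws \<subseteq> S \<Longrightarrow> word_map ws \<in> gen_group S"
  unfolding gen_group_def by blast

lemma gen_groupE:
  "w \<in> gen_group S \<Longrightarrow> (\<And>ws. set ws \<subseteq> S \<Longrightarrow> w = word_map ws \<Longrightarrow> thesis) \<Longrightarrow> thesis"
  unfolding gen_group_def by blast

lemma id_in_gen_group: "id \<in> gen_group S"
  using gen_groupI[of "[]" S] by simp

lemma comp_in_gen_group: "u \<in> gen_group S \<Longrightarrow> v \<in> gen_group S \<Longrightarrow> u \<circ> v \<in> gen_group S"
  by (metis gen_groupE gen_groupI set_append Un_subset_iff word_map_append)

lemma refl_in_gen_group: "a \<in> S \<Longrightarrow> refl a \<in> gen_group S"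
  using gen_groupI[of "[a]" S] by simp

lemma inverse_in_gen_group:
  "u \<in> gen_group S \<Longrightarrow> \<exists>u'\<in>gen_group S. (\<forall>x. u' (u x) = x) \<and> (\<forall>x. u (u' x) = x)"
  by (metis gen_groupE gen_groupI set_rev word_map_rev_cancel word_map_cancel_rev)

lemma orthogonal_transformation_gen_group: "u \<in> gen_group S \<Longrightarrow> orthogonal_transformation u"
  by (metis gen_groupE orthogonal_transformation_word_map)

lemma gen_group_mono: "S \<subseteq> T \<Longrightarrow> gen_group S \<subseteq> gen_group T"
  unfolding gen_group_def by blast

lemma gen_group_fixes:
  assumes "u \<in> gen_group S" and "\<And>a. a \<in> S \<Longrightarrow> refl a x = x"
  shows "u x = x"
proof -
  obtain ws where "set ws \<subseteq> S" "u = word_map ws" using assms(1) by (rule gen_groupE)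
  have "word_map ws x = x" if "set ws \<subseteq> S" for ws
    using that assms(2) by (induction ws) auto
  then show ?thesis using \<open>set ws \<subseteq> S\<close> \<open>u = word_map ws\<close> by simp
qed

lemma representation_eq_sum:
  assumes "finite B" "independent B" "v \<in> span B"
    and "\<And>x. x \<notin> B \<Longrightarrow> f x = 0" and "(\<Sum>x\<in>B. f x *\<^sub>R x) = v"
  shows "representation B v = f"
proof (rule representation_eqI[OF assms(2,3)])
  show "f b \<noteq> 0 \<Longrightarrow> b \<in> B" for b using assms(4) by blast
  show "finite {b. f b \<noteq> 0}" using assms(1,4) by (metis (mono_tags) finite_subset mem_Collect_eq subsetI)
  have "(\<Sum>b | f b \<noteq> 0. f b *\<^sub>R b) = (\<Sum>x\<in>B. f x *\<^sub>R x)"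
    using assms(1,4) by (intro sum.mono_neutral_left) auto
  then show "(\<Sum>b | f b \<noteq> 0. f b *\<^sub>R b) = v" using assms(5) by simp
qed

lemma nn_comb_iff_representation:
  assumes "finite B" "independent B" "span B = UNIV"
  shows "nn_comb B v \<longleftrightarrow> (\<forall>b\<in>B. representation B v b \<in> \<nat>)"
proof
  assume "nn_comb B v"
  then obtain c :: "'a \<Rightarrow> nat" where v: "v = (\<Sum>b\<in>B. of_nat (c b) *\<^sub>R b)"
    by (auto simp: nn_comb_def)
  have "representation B v = (\<lambda>x. if x \<in> B then of_nat (c x) else 0)"
    by (rule representation_eq_sum) (use assms v in \<open>auto intro: sum.cong\<close>)
  then show "\<forall>b\<in>B. representation B v b \<in> \<nat>" by simp
next
  assume h: "\<forall>b\<in>B. representation B v b \<in> \<nat>"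
  define c where "c b = nat \<lfloor>representation B v b\<rfloor>" for b
  have "\<forall>b\<in>B. of_nat (c b) = representation B v b"
    using h unfolding c_def by (auto elim!: Nats_cases)
  then have "v = (\<Sum>b\<in>B. of_nat (c b) *\<^sub>R b)"
    using sum_representation_eq[OF assms(2), of v B] assms by (auto intro: sum.cong)
  then show "nn_comb B v" unfolding nn_comb_def by blast
qed

lemma Nats_nonneg: "(x::real) \<in> \<nat> \<Longrightarrow> 0 \<le> x"
  by (auto elim: Nats_cases)

lemma Ints_pos_ge_1: "(x::real) \<in> \<int> \<Longrightarrow> 0 < x \<Longrightarrow> 1 \<le> x"
  by (elim Ints_cases) simp

lemma Ints_between_1_2: "(x::real) \<in> \<int> \<Longrightarrow> 1 \<le> x \<Longrightarrow> x \<le> 2 \<Longrightarrow> x = 1 \<or> x = 2"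
proof -
  assume "x \<in> \<int>" "1 \<le> x" "x \<le> 2"
  then obtain z where z: "x = of_int z" "1 \<le> z" "z \<le> 2"
    by (metis Ints_cases of_int_le_iff of_int_1 of_int_numeral)
  then have "z = 1 \<or> z = 2" by linarith
  then show ?thesis using z by auto
qed

lemma nn_comb_add: "nn_comb S x \<Longrightarrow> nn_comb S y \<Longrightarrow> nn_comb S (x + y)"
proof -
  assume "nn_comb S x" "nn_comb S y"
  then obtain c d :: "'a \<Rightarrow> nat" where "x = (\<Sum>b\<in>S. of_nat (c b) *\<^sub>R b)" "y = (\<Sum>b\<in>S. of_nat (d b) *\<^sub>R b)"
    by (auto simp: nn_comb_def)
  then have "x + y = (\<Sum>b\<in>S. of_nat (c b + d b) *\<^sub>R b)" by (simp add: sum.distrib scaleR_add_left)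
  then show ?thesis unfolding nn_comb_def by (rule exI[of _ "\<lambda>b. c b + d b"])
qed

lemma nn_comb_zero: "nn_comb S 0"
  unfolding nn_comb_def by (rule exI[of _ "\<lambda>_. 0"]) simp

lemma root_le_refl: "root_le S x x"
  by (simp add: root_le_def nn_comb_zero)

lemma root_le_trans: "root_le S x y \<Longrightarrow> root_le S y z \<Longrightarrow> root_le S x z"
  using nn_comb_add[of S "y - x" "z - y"] by (simp add: root_le_def)

lemma ideal_compl_ideal_compl:
  assumes "c ` P \<subseteq> P" "\<And>x. c (c x) = x" "I \<subseteq> P"
  shows "ideal_compl P c (ideal_compl P c I) = I"
proof -
  have "c ` (P - c ` I) = P - I"
  proof
    show "c ` (P - c ` I) \<subseteq> P - I" using assms by (auto simp: image_iff) metis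
    show "P - I \<subseteq> c ` (P - c ` I)"
    proof
      fix z assume "z \<in> P - I"
      then have "c z \<in> P - c ` I" "z = c (c z)" using assms by (auto simp: image_iff) metis
      then show "z \<in> c ` (P - c ` I)" by blast
    qed
  qed
  then show ?thesis using assms(3) by (auto simp: ideal_compl_def)
qed

lemma lower_ideals_Diff_max:
  fixes h :: "'b \<Rightarrow> real"
  assumes I: "I \<in> lower_ideals P le" and g: "\<gamma> \<in> I" and max: "\<And>x. x \<in> I \<Longrightarrow> h x \<le> h \<gamma>"
    and mono: "\<And>x y. le y x \<Longrightarrow> y \<noteq> x \<Longrightarrow> h y < h x"
  shows "I - {\<gamma>} \<in> lower_ideals P le"
  unfolding lower_ideals_def
proof (intro CollectI conjI ballI impI)
  show "I - {\<gamma>} \<subseteq> P" using I by (auto simp: lower_ideals_def)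
  fix x y assume x: "x \<in> I - {\<gamma>}" and y: "y \<in> P" and le: "le y x"
  have "y \<noteq> \<gamma>" using mono[OF le] max x by force
  then show "y \<in> I - {\<gamma>}" using I x y le by (auto simp: lower_ideals_def)
qed

locale based_root_system =
  fixes R Sm :: "'a::euclidean_space set"
  assumes root_system: "root_system R" and base: "is_base R Sm"
begin

lemma finite_R: "finite R" using root_system by (simp add: root_system_def)
lemma zero_notin_R: "0 \<notin> R" using root_system by (simp add: root_system_def)
lemma span_R: "span R = UNIV" using root_system by (simp add: root_system_def)
lemma refl_in_R: "a \<in> R \<Longrightarrow> b \<in> R \<Longrightarrow> refl a b \<in> R"
  using root_system by (auto simp: root_system_def)
lemma pairing_Ints: "a \<in> R \<Longrightarrow> b \<in> R \<Longrightarrow> 2 * (b \<bullet> a) / (a \<bullet> a) \<in> \<int>"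
  using root_system by (simp add: root_system_def)
lemma reduced: "a \<in> R \<Longrightarrow> c *\<^sub>R a \<in> R \<Longrightarrow> c = 1 \<or> c = -1"
  using root_system by (simp add: root_system_def)
lemma simple_subset_R: "Sm \<subseteq> R" using base by (simp add: is_base_def)
lemma independent_simple: "independent Sm" using base by (simp add: is_base_def)
lemma finite_simple: "finite Sm" using simple_subset_R finite_R finite_subset by blast
lemma nn_comb_root: "a \<in> R \<Longrightarrow> nn_comb Sm a \<or> nn_comb Sm (- a)"
  using base by (simp add: is_base_def)
lemma uminus_in_R: "a \<in> R \<Longrightarrow> - a \<in> R" using refl_in_R[of a a] by (simp add: refl_self)
lemma root_nonzero: "a \<in> R \<Longrightarrow> a \<noteq> 0" using zero_notin_R by auto
lemma simple_in_R: "a \<in> Sm \<Longrightarrow> a \<in> R" using simple_subset_R by auto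
lemma inner_self_root_pos: "a \<in> R \<Longrightarrow> a \<bullet> a > 0" using root_nonzero by simp

lemma span_simple: "span Sm = UNIV"
proof -
  have "nn_comb Sm v \<Longrightarrow> v \<in> span Sm" for v
    by (auto simp: nn_comb_def intro: span_sum span_scale span_base)
  then have "R \<subseteq> span Sm" using nn_comb_root span_neg[of "- _" Sm] by auto
  then have "span R \<subseteq> span Sm" by (simp add: span_minimal)
  then show ?thesis using span_R by auto
qed

definition coeff :: "'a \<Rightarrow> 'a \<Rightarrow> real" where "coeff b v = representation Sm v b"

lemma coeff_add: "coeff b (x + y) = coeff b x + coeff b y"
  unfolding coeff_def using representation_add[OF independent_simple] span_simple by simp
lemma coeff_diff: "coeff b (x - y) = coeff b x - coeff b y"
  unfolding coeff_def using representation_diff[OF independent_simple] span_simple by simp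
lemma coeff_uminus: "coeff b (- x) = - coeff b x"
  unfolding coeff_def using representation_neg[OF independent_simple] span_simple by simp
lemma coeff_scale: "coeff b (c *\<^sub>R x) = c * coeff b x"
  unfolding coeff_def using representation_scale[OF independent_simple] span_simple by simp
lemma coeff_sum: "coeff b (sum f I) = (\<Sum>i\<in>I. coeff b (f i))"
  unfolding coeff_def using representation_sum[OF independent_simple, of I f] span_simple by simp
lemma sum_coeff: "(\<Sum>b\<in>Sm. coeff b v *\<^sub>R b) = v"
  unfolding coeff_def using sum_representation_eq[OF independent_simple] span_simple finite_simple
  by simp
lemma coeff_simple: "b \<in> Sm \<Longrightarrow> coeff c b = (if c = b then 1 else 0)"
  unfolding coeff_def using representation_basis[OF independent_simple] by simp
lemma coeff_notin: "c \<notin> Sm \<Longrightarrow> coeff c v = 0"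
  unfolding coeff_def using representation_ne_zero by blast

lemma coeff_eq_0_imp_zero: "(\<And>b. b \<in> Sm \<Longrightarrow> coeff b v = 0) \<Longrightarrow> v = 0"
  using sum_coeff[of v] by simp

lemma nn_comb_simple_iff: "nn_comb Sm v \<longleftrightarrow> (\<forall>b\<in>Sm. coeff b v \<in> \<nat>)"
  unfolding coeff_def
  by (rule nn_comb_iff_representation[OF finite_simple independent_simple span_simple])

lemma root_le_iff: "root_le Sm x y \<longleftrightarrow> (\<forall>b\<in>Sm. coeff b (y - x) \<in> \<nat>)"
  by (simp add: root_le_def nn_comb_simple_iff)

abbreviation P where "P \<equiv> pos_roots R Sm"

lemma pos_roots_iff: "a \<in> P \<longleftrightarrow> a \<in> R \<and> (\<forall>b\<in>Sm. 0 \<le> coeff b a)"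
proof
  assume "a \<in> P" then show "a \<in> R \<and> (\<forall>b\<in>Sm. 0 \<le> coeff b a)"
    by (auto simp: pos_roots_def nn_comb_simple_iff Nats_altdef2)
next
  assume h: "a \<in> R \<and> (\<forall>b\<in>Sm. 0 \<le> coeff b a)"
  have "\<forall>b\<in>Sm. coeff b a \<in> \<nat>"
  proof (cases "nn_comb Sm a")
    case False
    then have "\<forall>b\<in>Sm. - coeff b a \<in> \<nat>"
      using nn_comb_root[of a] h by (auto simp: nn_comb_simple_iff coeff_uminus)
    then have "\<forall>b\<in>Sm. coeff b a = 0" using h Nats_nonneg by force
    then show ?thesis by simp
  qed (simp add: nn_comb_simple_iff)
  then show "a \<in> P" using h by (simp add: pos_roots_def nn_comb_simple_iff)
qed

lemma pos_root_in_R: "a \<in> P \<Longrightarrow> a \<in> R" by (simp add: pos_roots_iff)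

lemma coeff_pos_root_Nats: "a \<in> P \<Longrightarrow> coeff b a \<in> \<nat>"
  by (cases "b \<in> Sm") (auto simp: pos_roots_def nn_comb_simple_iff coeff_notin)

lemma finite_P: "finite P" using finite_R by (rule finite_subset[rotated]) (auto simp: pos_roots_def)

lemma pos_or_uminus_pos: assumes "a \<in> R" shows "a \<in> P \<or> - a \<in> P"
  using nn_comb_root[OF assms] uminus_in_R[OF assms] assms by (auto simp: pos_roots_def)

lemma uminus_not_pos: "a \<in> P \<Longrightarrow> - a \<notin> P"
proof
  assume a: "a \<in> P" "- a \<in> P"
  then have "\<forall>b\<in>Sm. coeff b a = 0" by (fastforce simp: pos_roots_iff coeff_uminus)
  then show False using coeff_eq_0_imp_zero a pos_root_in_R root_nonzero by blast
qed

lemma not_pos_iff: "a \<in> R \<Longrightarrow> a \<notin> P \<longleftrightarrow> - a \<in> P"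
  using pos_or_uminus_pos uminus_not_pos by blast

lemma pos_if_coeff_pos: "a \<in> R \<Longrightarrow> coeff b a > 0 \<Longrightarrow> a \<in> P"
  using pos_or_uminus_pos[of a] by (cases "b \<in> Sm") (auto simp: pos_roots_iff coeff_uminus coeff_notin)

lemma not_pos_if_coeff_neg: "a \<in> R \<Longrightarrow> coeff b a < 0 \<Longrightarrow> a \<notin> P"
  by (cases "b \<in> Sm") (force simp: pos_roots_iff coeff_notin)+

lemma coeff_not_pos_nonpos: "a \<in> R \<Longrightarrow> a \<notin> P \<Longrightarrow> coeff c a \<le> 0"
  using not_pos_iff[of a] by (cases "c \<in> Sm") (auto simp: pos_roots_iff coeff_uminus coeff_notin)

lemma not_pos_if_coeffs_nonpos: "a \<in> R \<Longrightarrow> (\<And>b. b \<in> Sm \<Longrightarrow> coeff b a \<le> 0) \<Longrightarrow> a \<notin> P"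
  using pos_roots_iff[of "- a"] uminus_in_R not_pos_iff by (force simp: coeff_uminus)

lemma simple_pos: "a \<in> Sm \<Longrightarrow> a \<in> P"
  using simple_in_R by (auto simp: pos_roots_iff coeff_simple)

lemma simple_inner_pos_exists: assumes "\<beta> \<in> P" shows "\<exists>a\<in>Sm. a \<bullet> \<beta> > 0"
proof (rule ccontr)
  assume "\<not> ?thesis"
  then have "\<forall>c\<in>Sm. coeff c \<beta> * (c \<bullet> \<beta>) \<le> 0"
    using assms by (auto simp: pos_roots_iff not_less intro!: mult_nonneg_nonpos)
  then have "(\<Sum>c\<in>Sm. coeff c \<beta> *\<^sub>R c) \<bullet> \<beta> \<le> 0" by (simp add: inner_sum_left sum_nonpos)
  then have "\<beta> \<bullet> \<beta> \<le> 0" by (simp add: sum_coeff)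
  then show False using inner_self_root_pos[OF pos_root_in_R[OF assms]] by simp
qed

lemma refl_simple_pos:
  assumes a: "a \<in> Sm" and b: "\<beta> \<in> P" and ne: "\<beta> \<noteq> a"
  shows "refl a \<beta> \<in> P"
proof (cases "\<exists>c\<in>Sm - {a}. coeff c \<beta> \<noteq> 0")
  case True
  then obtain c where c: "c \<in> Sm" "c \<noteq> a" "coeff c \<beta> \<noteq> 0" by auto
  then have "coeff c \<beta> > 0" using b by (force simp: pos_roots_iff)
  then have "coeff c (refl a \<beta>) > 0" using c a by (simp add: refl_def coeff_diff coeff_scale coeff_simple)
  then show ?thesis
    using pos_if_coeff_pos refl_in_R simple_in_R[OF a] pos_root_in_R[OF b] by blast
next
  case False
  \<comment> \<open>Otherwise \<beta> is a multiple of a, hence \<beta> = a by reducedness.\<close>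
  have "\<beta> = (\<Sum>c\<in>Sm. coeff c \<beta> *\<^sub>R c)" by (simp add: sum_coeff)
  also have "\<dots> = (\<Sum>c\<in>Sm. (if c = a then coeff a \<beta> *\<^sub>R a else 0))"
    using False by (intro sum.cong) auto
  also have "\<dots> = coeff a \<beta> *\<^sub>R a" using a finite_simple by simp
  finally have eq: "\<beta> = coeff a \<beta> *\<^sub>R a" .
  then have "coeff a \<beta> = 1 \<or> coeff a \<beta> = -1"
    using reduced simple_in_R[OF a] pos_root_in_R[OF b] by metis
  moreover have "coeff a \<beta> \<ge> 0" using b a by (simp add: pos_roots_iff)
  ultimately show ?thesis using eq ne by auto
qed

lemma refl_simple_pos_iff:
  assumes a: "a \<in> Sm" and b: "\<beta> \<in> R"
  shows "refl a \<beta> \<in> P \<longleftrightarrow> (\<beta> \<in> P \<and> \<beta> \<noteq> a) \<or> \<beta> = - a"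
proof (cases "\<beta> \<in> P")
  case True
  have "a + a \<noteq> 0"
    using root_nonzero[OF simple_in_R[OF a]] by (metis scaleR_2 scaleR_eq_0_iff zero_neq_numeral)
  then have "a \<noteq> - a" by (metis add.right_inverse)
  then show ?thesis
    using refl_simple_pos[OF a True] refl_self[of a] uminus_not_pos[OF simple_pos[OF a]]
      uminus_not_pos[OF True] True
    by (cases "\<beta> = a") auto
next
  case False
  then have nb: "- \<beta> \<in> P" using not_pos_iff b by auto
  show ?thesis
  proof (cases "- \<beta> = a")
    case True
    then show ?thesis using refl_self[of a] refl_uminus[of a a] simple_pos[OF a] by auto
  next
    case ne: False
    have "refl a (- \<beta>) \<in> P" using refl_simple_pos[OF a nb ne] .
    then have "refl a \<beta> \<notin> P" by (metis uminus_not_pos refl_uminus minus_minus)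
    then show ?thesis using False ne by auto
  qed
qed

abbreviation W where "W \<equiv> gen_group Sm"

lemma gen_group_subset_W: "S \<subseteq> Sm \<Longrightarrow> gen_group S \<subseteq> W"
  by (rule gen_group_mono)

lemma orthogonal_transformation_W: "w \<in> W \<Longrightarrow> orthogonal_transformation w"
  by (rule orthogonal_transformation_gen_group)

lemma linear_W: "w \<in> W \<Longrightarrow> linear w"
  using orthogonal_transformation_W orthogonal_transformation_linear by blast

lemma inj_W: "w \<in> W \<Longrightarrow> inj w"
  using orthogonal_transformation_W orthogonal_transformation_inj by blast

lemma W_uminus: "w \<in> W \<Longrightarrow> w (- x) = - w x"
  using linear_W linear_neg by blast

lemma word_map_in_R: "set ws \<subseteq> R \<Longrightarrow> \<beta> \<in> R \<Longrightarrow> word_map ws \<beta> \<in> R"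
  by (induction ws arbitrary: \<beta>) (auto intro: refl_in_R)

lemma W_maps_R: "w \<in> W \<Longrightarrow> \<beta> \<in> R \<Longrightarrow> w \<beta> \<in> R"
  by (metis gen_groupE order_trans simple_subset_R word_map_in_R)

lemma W_surj_R: assumes "w \<in> W" "\<beta> \<in> R" shows "\<exists>\<epsilon>\<in>R. w \<epsilon> = \<beta>"
proof -
  have "w ` R \<subseteq> R" using W_maps_R assms(1) by blast
  moreover have "card (w ` R) = card R" using inj_W[OF assms(1)] by (simp add: card_image inj_on_subset)
  ultimately have "w ` R = R" using card_subset_eq[OF finite_R] by simp
  then show ?thesis using assms(2) by (metis image_iff)
qed

section \<open>Inversions and length\<close>

definition inversions :: "('a \<Rightarrow> 'a) \<Rightarrow> 'a set" where
  "inversions w = {\<beta>\<in>P. w \<beta> \<notin> P}"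

definition n_inversions :: "('a \<Rightarrow> 'a) \<Rightarrow> nat" where
  "n_inversions w = card (inversions w)"

lemma finite_inversions: "finite (inversions w)"
  using finite_P by (simp add: inversions_def)

lemma simple_notin_refl_image: "a \<in> Sm \<Longrightarrow> X \<subseteq> P \<Longrightarrow> a \<notin> refl a ` X"
  using uminus_not_pos[OF simple_pos] by (auto simp only: mem_refl_image_iff refl_self)

lemma inversions_comp_refl:
  assumes a: "a \<in> Sm" and w: "w \<in> W"
  shows "inversions (w \<circ> refl a) = (if w a \<in> P then {a} else {}) \<union> refl a ` (inversions w - {a})"
proof (rule set_eqI)
  fix \<beta>
  have naP: "- a \<notin> P" using uminus_not_pos simple_pos[OF a] by auto
  show "\<beta> \<in> inversions (w \<circ> refl a) \<longleftrightarrow>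
      \<beta> \<in> (if w a \<in> P then {a} else {}) \<union> refl a ` (inversions w - {a})"
  proof (cases "\<beta> = a")
    case True
    have "w (refl a a) \<notin> P \<longleftrightarrow> w a \<in> P"
      using not_pos_iff[OF uminus_in_R[OF W_maps_R[OF w simple_in_R[OF a]]]]
      by (simp add: refl_self W_uminus[OF w])
    moreover have "a \<notin> refl a ` (inversions w - {a})"
      using simple_notin_refl_image[OF a] by (auto simp: inversions_def)
    ultimately show ?thesis using True simple_pos[OF a] by (simp add: inversions_def)
  next
    case False
    show ?thesis
    proof (cases "\<beta> \<in> R")
      case True
      have "refl a \<beta> = a \<longleftrightarrow> \<beta> = - a" by (metis refl_refl refl_self refl_uminus minus_minus)
      then show ?thesis
        using False refl_simple_pos_iff[OF a True] naP by (auto simp: inversions_def mem_refl_image_iff)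
    next
      case bR: False
      have "refl a \<beta> \<notin> R" using bR refl_in_R[OF simple_in_R[OF a]] by (metis refl_refl)
      then show ?thesis using False bR by (auto simp: inversions_def mem_refl_image_iff pos_roots_def)
    qed
  qed
qed

lemma n_inversions_comp_refl:
  assumes a: "a \<in> Sm" and w: "w \<in> W"
  shows "n_inversions (w \<circ> refl a) = (if w a \<in> P then Suc (n_inversions w) else n_inversions w - 1)"
proof -
  have inj: "inj_on (refl a) X" for X by (metis inj_onI refl_refl)
  have "card (refl a ` (inversions w - {a})) = card (inversions w - {a})"
    using card_image[OF inj] .
  moreover have "a \<notin> refl a ` (inversions w - {a})"
    using simple_notin_refl_image[OF a] by (auto simp: inversions_def)
  moreover have "a \<in> inversions w \<longleftrightarrow> w a \<notin> P" using simple_pos[OF a] by (simp add: inversions_def)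
  ultimately show ?thesis
    using inversions_comp_refl[OF a w] finite_inversions[of w]
    by (auto simp: n_inversions_def card_insert_if)
qed

lemma deletion:
  "set xs \<subseteq> Sm \<Longrightarrow> a \<in> Sm \<Longrightarrow> word_map xs a \<notin> P \<Longrightarrow>
   \<exists>ys. length ys < length xs \<and> set ys \<subseteq> set xs \<and> word_map (xs @ [a]) = word_map ys"
proof (induction xs)
  case Nil
  then show ?case using simple_pos by simp
next
  case (Cons x xs)
  show ?case
  proof (cases "word_map xs a \<in> P")
    case False
    then obtain ys where "length ys < length xs" "set ys \<subseteq> set xs" "word_map (xs @ [a]) = word_map ys"
      using Cons by auto
    then show ?thesis by (intro exI[of _ "x # ys"]) auto
  next
    case True
    have "word_map xs a \<in> R" using word_map_in_R Cons.prems simple_subset_R by auto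
    moreover have "refl x (word_map xs a) \<notin> P" using Cons.prems by simp
    ultimately have eq: "word_map xs a = x" using refl_simple_pos_iff True Cons.prems by auto
    have "word_map (x # xs @ [a]) = word_map xs"
    proof
      fix y
      have "word_map (x # xs @ [a]) y = refl x (word_map xs (refl a y))"
        by (simp add: word_map_append)
      also have "word_map xs (refl a y) = refl (word_map xs a) (word_map xs y)"
        using refl_conj[OF orthogonal_transformation_word_map] by metis
      finally show "word_map (x # xs @ [a]) y = word_map xs y" using eq by simp
    qed
    then show ?thesis by (intro exI[of _ xs]) auto
  qed
qed

lemma n_inversions_reduced_word:
  assumes "S \<subseteq> Sm" "set ws \<subseteq> S"
    and "\<And>ys. set ys \<subseteq> S \<Longrightarrow> word_map ys = word_map ws \<Longrightarrow> length ws \<le> length ys"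
  shows "n_inversions (word_map ws) = length ws"
  using assms(2,3)
proof (induction ws rule: rev_induct)
  case Nil
  then show ?case by (simp add: n_inversions_def inversions_def)
next
  case (snoc a xs)
  have a: "a \<in> Sm" and xs: "set xs \<subseteq> S" using snoc.prems assms(1) by auto
  have reduced: "length xs \<le> length ys" if "set ys \<subseteq> S" "word_map ys = word_map xs" for ys
    using snoc.prems(2)[of "ys @ [a]"] that snoc.prems(1) by (simp add: word_map_append)
  have "word_map xs a \<in> P"
  proof (rule ccontr)
    assume "word_map xs a \<notin> P"
    then obtain ys where "length ys < length xs" "set ys \<subseteq> set xs" "word_map (xs @ [a]) = word_map ys"
      using deletion xs assms(1) a by blast
    then show False using snoc.prems(2)[of ys] xs by fastforce
  qed
  moreover have "word_map xs \<in> W" using gen_groupI xs assms(1) by blast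
  ultimately have "n_inversions (word_map xs \<circ> refl a) = Suc (length xs)"
    using n_inversions_comp_refl[OF a] snoc.IH[OF xs reduced] by simp
  moreover have "word_map (xs @ [a]) = word_map xs \<circ> refl a" by (rule ext) (simp add: word_map_append)
  ultimately show ?case by (simp only: length_append_singleton)
qed

lemma word_len_eq_n_inversions:
  assumes S: "S \<subseteq> Sm" and w: "w \<in> gen_group S"
  shows "word_len S w = n_inversions w"
proof -
  let ?Q = "\<lambda>k. \<exists>ws. set ws \<subseteq> S \<and> length ws = k \<and> word_map ws = w"
  have "\<exists>k. ?Q k" using w by (auto elim: gen_groupE)
  then obtain ws where ws: "set ws \<subseteq> S" "length ws = word_len S w" "word_map ws = w"
    using LeastI_ex[of ?Q] unfolding word_len_def by blast
  have "length ws \<le> length ys" if "set ys \<subseteq> S" "word_map ys = word_map ws" for ys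
    using ws that unfolding word_len_def by (auto intro: Least_le)
  then show ?thesis using n_inversions_reduced_word[OF S ws(1)] ws by simp
qed

lemma n_inversions_eq_0_imp_id:
  assumes "w \<in> W" "n_inversions w = 0" shows "w = id"
proof -
  let ?Q = "\<lambda>k. \<exists>ws. set ws \<subseteq> Sm \<and> length ws = k \<and> word_map ws = w"
  have "\<exists>k. ?Q k" using assms(1) by (auto elim: gen_groupE)
  moreover have "word_len Sm w = 0" using word_len_eq_n_inversions[OF order_refl assms(1)] assms(2) by simp
  ultimately show ?thesis using LeastI_ex[of ?Q] unfolding word_len_def by auto
qed

lemma pos_image_if_support_pos:
  assumes "linear w" "\<beta> \<in> P" "w \<beta> \<in> R" and h: "\<And>c. c \<in> Sm \<Longrightarrow> coeff c \<beta> \<noteq> 0 \<Longrightarrow> w c \<in> P"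
  shows "w \<beta> \<in> P"
  unfolding pos_roots_iff
proof (intro conjI ballI)
  fix d assume d: "d \<in> Sm"
  have "w \<beta> = (\<Sum>c\<in>Sm. coeff c \<beta> *\<^sub>R w c)"
    using sum_coeff[of \<beta>] assms(1) by (metis (no_types, lifting) linear_scale linear_sum sum.cong)
  then have "coeff d (w \<beta>) = (\<Sum>c\<in>Sm. coeff c \<beta> * coeff d (w c))" by (simp add: coeff_sum coeff_scale)
  also have "\<dots> \<ge> 0"
    using h assms(2) d by (intro sum_nonneg) (force simp: pos_roots_iff)
  finally show "0 \<le> coeff d (w \<beta>)" .
qed (rule assms(3))

lemma simple_inversion_exists:
  assumes "w \<in> W" "n_inversions w \<noteq> 0" shows "\<exists>a\<in>Sm. w a \<notin> P"
proof (rule ccontr)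
  assume "\<not> ?thesis"
  then have "w \<beta> \<in> P" if "\<beta> \<in> P" for \<beta>
    using pos_image_if_support_pos[OF linear_W[OF assms(1)] that] W_maps_R[OF assms(1)]
      pos_root_in_R that by blast
  then have "inversions w = {}" by (auto simp: inversions_def)
  then show False using assms(2) by (simp add: n_inversions_def)
qed

lemma W_length_induct [consumes 1, case_names id step]:
  assumes "w \<in> W" and "Q id"
    and step: "\<And>u a. u \<in> W \<Longrightarrow> a \<in> Sm \<Longrightarrow> u a \<in> P \<Longrightarrow> Q u \<Longrightarrow> Q (u \<circ> refl a)"
  shows "Q w"
  using assms(1)
proof (induction "n_inversions w" arbitrary: w rule: less_induct)
  case less
  show ?case
  proof (cases "n_inversions w = 0")
    case True
    then show ?thesis using n_inversions_eq_0_imp_id less.prems assms(2) by blast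
  next
    case False
    then obtain a where a: "a \<in> Sm" "w a \<notin> P" using simple_inversion_exists less.prems by blast
    define u where "u = w \<circ> refl a"
    have u: "u \<in> W" using comp_in_gen_group[OF less.prems refl_in_gen_group[OF a(1)]] by (simp add: u_def)
    have "u a \<in> P"
      using not_pos_iff W_maps_R[OF less.prems simple_in_R[OF a(1)]] a(2)
      by (simp add: u_def refl_self W_uminus[OF less.prems])
    moreover have "n_inversions u < n_inversions w"
      using n_inversions_comp_refl[OF a(1) less.prems] a(2) False by (simp add: u_def)
    moreover have "w = u \<circ> refl a" by (rule ext) (simp add: u_def)
    ultimately show ?thesis using step[OF u a(1)] less.hyps[OF _ u] by simp
  qed
qed

lemma inversions_inject:
  assumes "u \<in> W" "v \<in> W" "inversions u = inversions v" shows "u = v"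
  using assms
proof (induction u arbitrary: v rule: W_length_induct)
  case id
  then have "inversions v = {}" by (simp add: inversions_def)
  then have "v = id" using n_inversions_eq_0_imp_id id.prems(1) by (simp add: n_inversions_def)
  then show ?case by simp
next
  case (step u a)
  have "a \<notin> inversions u" using step.hyps(3) by (simp add: inversions_def)
  then have iu: "inversions (u \<circ> refl a) = insert a (refl a ` inversions u)"
    using inversions_comp_refl[OF step.hyps(2,1)] step.hyps(3) by simp
  have "a \<notin> refl a ` inversions u"
    using simple_notin_refl_image[OF step.hyps(2)] by (auto simp: inversions_def)
  then have inv_u: "refl a ` (inversions (u \<circ> refl a) - {a}) = inversions u"
    using iu by (simp add: image_image)
  have "a \<in> inversions v" using iu step.prems(2) by simp
  then have "v a \<notin> P" by (simp add: inversions_def)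
  then have "inversions (v \<circ> refl a) = refl a ` (inversions v - {a})"
    using inversions_comp_refl[OF step.hyps(2) step.prems(1)] by simp
  then have "inversions (v \<circ> refl a) = inversions u" using step.prems(2) inv_u by (simp add: comp_def)
  then have "v \<circ> refl a = u"
    using step.IH comp_in_gen_group[OF step.prems(1) refl_in_gen_group[OF step.hyps(2)]] by metis
  then show ?case by (auto simp: comp_assoc)
qed

definition height :: "'a \<Rightarrow> real" where "height v = (\<Sum>b\<in>Sm. coeff b v)"

lemma height_refl_simple:
  assumes "a \<in> Sm" shows "height (refl a v) = height v - 2 * (v \<bullet> a) / (a \<bullet> a)"
proof -
  have "height a = 1" using assms finite_simple by (simp add: height_def coeff_simple)
  moreover have "height (refl a v) = height v - 2 * (v \<bullet> a) / (a \<bullet> a) * height a"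
    by (simp add: height_def refl_def coeff_diff coeff_scale sum_subtractf sum_distrib_left)
  ultimately show ?thesis by simp
qed

lemma height_pos_root_nonneg: "\<beta> \<in> P \<Longrightarrow> height \<beta> \<ge> 0"
  unfolding height_def by (rule sum_nonneg) (simp add: pos_roots_iff)

lemma pos_root_conj_simple:
  assumes "\<beta> \<in> P" shows "\<exists>ws a. set ws \<subseteq> Sm \<and> a \<in> Sm \<and> \<beta> = word_map ws a"
  using assms
proof (induction "nat \<lceil>height \<beta>\<rceil>" arbitrary: \<beta> rule: less_induct)
  case less
  show ?case
  proof (cases "\<beta> \<in> Sm")
    case True
    then show ?thesis by (intro exI[of _ "[]"] exI[of _ \<beta>]) auto
  next
    case False
    obtain a where a: "a \<in> Sm" "a \<bullet> \<beta> > 0" using simple_inner_pos_exists[OF less.prems] by blast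
    define k where "k = 2 * (\<beta> \<bullet> a) / (a \<bullet> a)"
    have "k > 0" using a inner_self_root_pos[OF simple_in_R[OF a(1)]] by (simp add: k_def inner_commute)
    then have "k \<ge> 1"
      using Ints_pos_ge_1 pairing_Ints[OF simple_in_R[OF a(1)] pos_root_in_R[OF less.prems]]
      by (simp add: k_def)
    moreover have pos: "refl a \<beta> \<in> P" using refl_simple_pos[OF a(1) less.prems] False a(1) by auto
    moreover have "height (refl a \<beta>) = height \<beta> - k" using height_refl_simple[OF a(1)] by (simp add: k_def)
    ultimately have "nat \<lceil>height (refl a \<beta>)\<rceil> < nat \<lceil>height \<beta>\<rceil>"
      using height_pos_root_nonneg[OF pos] by linarith
    then obtain ws a' where "set ws \<subseteq> Sm" "a' \<in> Sm" "refl a \<beta> = word_map ws a'"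
      using less.hyps pos by blast
    moreover have "\<beta> = refl a (refl a \<beta>)" by simp
    ultimately have "\<beta> = word_map (a # ws) a'" by simp
    then show ?thesis using \<open>set ws \<subseteq> Sm\<close> \<open>a' \<in> Sm\<close> a(1)
      by (intro exI[of _ "a # ws"] exI[of _ a']) auto
  qed
qed

lemma root_conj_simple:
  assumes "\<beta> \<in> R" shows "\<exists>ws a. set ws \<subseteq> Sm \<and> a \<in> Sm \<and> \<beta> = word_map ws a"
proof (cases "\<beta> \<in> P")
  case False
  then obtain ws a where ws: "set ws \<subseteq> Sm" "a \<in> Sm" "- \<beta> = word_map ws a"
    using pos_root_conj_simple not_pos_iff assms by blast
  have "\<beta> = word_map ws (- a)"
    using ws(3) linear_neg[OF orthogonal_transformation_linear[OF orthogonal_transformation_word_map]]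
    by (metis minus_minus)
  also have "\<dots> = word_map (ws @ [a]) a" by (simp add: word_map_append refl_self)
  finally show ?thesis using ws by (intro exI[of _ "ws @ [a]"] exI[of _ a]) auto
qed (use pos_root_conj_simple in blast)

lemma refl_root_in_W: assumes "\<beta> \<in> R" shows "refl \<beta> \<in> W"
proof -
  obtain ws a where ws: "set ws \<subseteq> Sm" "a \<in> Sm" "\<beta> = word_map ws a"
    using root_conj_simple[OF assms] by blast
  have "refl \<beta> = word_map (ws @ [a] @ rev ws)"
  proof
    fix y
    have "word_map (ws @ [a] @ rev ws) y = word_map ws (refl a (word_map (rev ws) y))"
      by (simp add: word_map_append)
    also have "\<dots> = refl (word_map ws a) (word_map ws (word_map (rev ws) y))"
      using refl_conj[OF orthogonal_transformation_word_map] by metis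
    finally show "refl \<beta> y = word_map (ws @ [a] @ rev ws) y" using ws(3) by (simp add: word_map_cancel_rev)
  qed
  then show ?thesis using gen_groupI[of "ws @ [a] @ rev ws" Sm] ws by simp
qed

lemma weyl_eq_W: "weyl R = W"
proof
  show "W \<subseteq> weyl R" unfolding weyl_def using simple_subset_R by (rule gen_group_mono)
  show "weyl R \<subseteq> W"
  proof
    fix w assume "w \<in> weyl R"
    then obtain ws where ws: "set ws \<subseteq> R" "w = word_map ws" unfolding weyl_def by (rule gen_groupE)
    have "word_map ws \<in> W" using ws(1)
      by (induction ws) (auto simp: id_def[symmetric] id_in_gen_group
          intro!: comp_in_gen_group refl_root_in_W)
    then show "w \<in> W" using ws by simp
  qed
qed

section \<open>Longest elements of parabolic subgroups\<close>

definition pos_roots_on :: "'a set \<Rightarrow> 'a set" where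
  "pos_roots_on S = {\<beta>\<in>P. \<forall>b\<in>Sm - S. coeff b \<beta> = 0}"

lemma pos_roots_on_simple: "pos_roots_on Sm = P"
  by (auto simp: pos_roots_on_def)

lemma coeff_gen_group_invariant:
  assumes "S \<subseteq> Sm" "u \<in> gen_group S" "b \<in> Sm - S"
  shows "coeff b (u v) = coeff b v"
proof -
  obtain ws where ws: "set ws \<subseteq> S" "u = word_map ws" using assms(2) by (rule gen_groupE)
  have "coeff b (word_map ws v) = coeff b v" using ws(1)
  proof (induction ws arbitrary: v)
    case (Cons a as)
    then have "a \<in> Sm" "a \<noteq> b" using assms(1,3) by auto
    then show ?case using Cons by (simp add: refl_def coeff_diff coeff_scale coeff_simple)
  qed simp
  then show ?thesis using ws by simp
qed

lemma inversions_gen_group_subset: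
  assumes S: "S \<subseteq> Sm" and u: "u \<in> gen_group S" shows "inversions u \<subseteq> pos_roots_on S"
proof
  fix \<beta> assume b: "\<beta> \<in> inversions u"
  then have bP: "\<beta> \<in> P" and ub: "u \<beta> \<notin> P" by (auto simp: inversions_def)
  have "coeff c \<beta> = 0" if c: "c \<in> Sm - S" for c
  proof (rule ccontr)
    assume "coeff c \<beta> \<noteq> 0"
    then have "coeff c (u \<beta>) > 0" using bP c coeff_gen_group_invariant[OF S u c] by (force simp: pos_roots_iff)
    moreover have "u \<beta> \<in> R" using W_maps_R pos_root_in_R[OF bP] u gen_group_subset_W[OF S] by blast
    ultimately show False using pos_if_coeff_pos ub by blast
  qed
  then show "\<beta> \<in> pos_roots_on S" using bP by (simp add: pos_roots_on_def)
qed

lemma inversions_eq_pos_roots_on: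
  assumes S: "S \<subseteq> Sm" and u: "u \<in> gen_group S" and neg: "\<forall>a\<in>S. u a \<notin> P"
  shows "inversions u = pos_roots_on S"
proof
  show "inversions u \<subseteq> pos_roots_on S" using inversions_gen_group_subset[OF S u] .
  have uW: "u \<in> W" using u gen_group_subset_W[OF S] by blast
  show "pos_roots_on S \<subseteq> inversions u"
  proof
    fix \<beta> assume b: "\<beta> \<in> pos_roots_on S"
    then have bP: "\<beta> \<in> P" by (simp add: pos_roots_on_def)
    have "(\<lambda>x. - u x) \<beta> \<in> P"
    proof (rule pos_image_if_support_pos[OF linear_compose_neg[OF linear_W[OF uW]] bP])
      show "- u \<beta> \<in> R" using uminus_in_R W_maps_R[OF uW pos_root_in_R[OF bP]] by auto
      fix c assume "c \<in> Sm" "coeff c \<beta> \<noteq> 0"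
      then have "c \<in> S" "c \<in> Sm" using b by (auto simp: pos_roots_on_def)
      then have "u c \<notin> P" "u c \<in> R" using neg W_maps_R[OF uW simple_in_R] by auto
      then show "- u c \<in> P" using not_pos_iff by blast
    qed
    then have "u \<beta> \<notin> P" using uminus_not_pos by force
    then show "\<beta> \<in> inversions u" using bP by (simp add: inversions_def)
  qed
qed

lemma longest_inversions_exists:
  assumes S: "S \<subseteq> Sm" shows "\<exists>u\<in>gen_group S. inversions u = pos_roots_on S"
proof -
  let ?G = "gen_group S"
  have "n_inversions u \<le> card (pos_roots_on S)" if "u \<in> ?G" for u
    unfolding n_inversions_def using inversions_gen_group_subset[OF S that] finite_P
    by (intro card_mono) (auto simp: pos_roots_on_def)
  then have "n_inversions ` ?G \<subseteq> {..card (pos_roots_on S)}" by auto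
  then have fin: "finite (n_inversions ` ?G)" using finite_subset by blast
  have "n_inversions ` ?G \<noteq> {}" using id_in_gen_group by blast
  with Max_in[OF fin] obtain u where u: "u \<in> ?G" "n_inversions u = Max (n_inversions ` ?G)"
    by (metis imageE)
  have "u a \<notin> P" if a: "a \<in> S" for a
  proof
    assume "u a \<in> P"
    then have "n_inversions (u \<circ> refl a) = Suc (n_inversions u)"
      using n_inversions_comp_refl[of a u] a S u(1) gen_group_subset_W[OF S] by auto
    moreover have "u \<circ> refl a \<in> ?G" using comp_in_gen_group[OF u(1) refl_in_gen_group[OF a]] .
    then have "n_inversions (u \<circ> refl a) \<le> n_inversions u" using u(2) Max_ge[OF fin] by simp
    ultimately show False by simp
  qed
  then show ?thesis using inversions_eq_pos_roots_on[OF S u(1)] u(1) by blast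
qed

lemma longest_elt_gen_group:
  assumes S: "S \<subseteq> Sm"
  shows "longest_elt (gen_group S) S \<in> gen_group S"
    and "inversions (longest_elt (gen_group S) S) = pos_roots_on S"
proof -
  obtain u where u: "u \<in> gen_group S" "inversions u = pos_roots_on S"
    using longest_inversions_exists[OF S] by blast
  have fin: "finite (pos_roots_on S)" using finite_P by (auto simp: pos_roots_on_def)
  have "longest_elt (gen_group S) S = u"
    unfolding longest_elt_def
  proof (rule the_equality)
    have "card (inversions v) \<le> card (inversions u)" if "v \<in> gen_group S" for v
      using u(2) card_mono[OF fin inversions_gen_group_subset[OF S that]] by simp
    then show "u \<in> gen_group S \<and> (\<forall>v\<in>gen_group S. word_len S v \<le> word_len S u)"
      using u(1) word_len_eq_n_inversions[OF S] by (simp add: n_inversions_def)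
    fix w assume "w \<in> gen_group S \<and> (\<forall>v\<in>gen_group S. word_len S v \<le> word_len S w)"
    then have w: "w \<in> gen_group S" and "word_len S u \<le> word_len S w" using u(1) by auto
    then have "card (pos_roots_on S) \<le> card (inversions w)"
      using word_len_eq_n_inversions[OF S] u by (simp add: n_inversions_def)
    then have "inversions w = pos_roots_on S"
      using card_seteq[OF fin inversions_gen_group_subset[OF S w]] by simp
    then show "w = u"
      using inversions_inject u w gen_group_subset_W[OF S] by (metis subsetD)
  qed
  then show "longest_elt (gen_group S) S \<in> gen_group S"
    and "inversions (longest_elt (gen_group S) S) = pos_roots_on S"
    using u by simp_all
qed

lemma longest_elt_involution:
  assumes S: "S \<subseteq> Sm"
  shows "longest_elt (gen_group S) S (longest_elt (gen_group S) S x) = x"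
proof -
  define u where "u = longest_elt (gen_group S) S"
  have u: "u \<in> gen_group S" "inversions u = pos_roots_on S"
    using longest_elt_gen_group[OF S] by (simp_all add: u_def)
  have uW: "u \<in> W" using u(1) gen_group_subset_W[OF S] by blast
  have inv: "\<beta> \<in> pos_roots_on S \<longleftrightarrow> \<beta> \<in> P \<and> u \<beta> \<notin> P" for \<beta>
    using u(2) by (auto simp: inversions_def)
  have "u (u \<beta>) \<in> P" if bP: "\<beta> \<in> P" for \<beta>
  proof (cases "\<beta> \<in> pos_roots_on S")
    case True
    have uR: "u \<beta> \<in> R" using W_maps_R[OF uW pos_root_in_R[OF bP]] .
    then have "- u \<beta> \<in> P" using True inv not_pos_iff by blast
    moreover have "\<forall>b\<in>Sm - S. coeff b (- u \<beta>) = 0"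
      using True coeff_gen_group_invariant[OF S u(1)] by (simp add: pos_roots_on_def coeff_uminus)
    ultimately have "- u \<beta> \<in> pos_roots_on S" by (simp add: pos_roots_on_def)
    then have "u (- u \<beta>) \<notin> P" using inv by blast
    then show ?thesis using not_pos_iff[OF W_maps_R[OF uW uR]] by (simp add: W_uminus[OF uW])
  next
    case False
    then have "u \<beta> \<in> P" using inv bP by blast
    moreover have "u \<beta> \<notin> pos_roots_on S"
      using False bP coeff_gen_group_invariant[OF S u(1)] by (simp add: pos_roots_on_def)
    ultimately show ?thesis using inv by blast
  qed
  then have "inversions (u \<circ> u) = {}" by (auto simp: inversions_def)
  then have "u \<circ> u = id"
    using n_inversions_eq_0_imp_id comp_in_gen_group[OF uW uW] by (simp add: n_inversions_def)
  then show ?thesis by (metis comp_apply id_apply u_def)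
qed

section \<open>Coordinates with respect to the simple coroots\<close>

definition cocoeff :: "'a \<Rightarrow> 'a \<Rightarrow> real" where
  "cocoeff b v = representation (coroot ` Sm) v (coroot b)"

lemma inj_on_coroot_simple: "inj_on coroot Sm"
  using inj_on_coroot zero_notin_R simple_subset_R by blast

lemma span_simple_coroots: "span (coroot ` Sm) = UNIV"
proof -
  have "b \<in> span (coroot ` Sm)" if b: "b \<in> Sm" for b
  proof -
    have "b = ((b \<bullet> b) / 2) *\<^sub>R coroot b" using root_nonzero[OF simple_in_R[OF b]] by (simp add: coroot_def)
    then show ?thesis by (metis b imageI span_base span_scale)
  qed
  then have "span Sm \<subseteq> span (coroot ` Sm)" by (simp add: span_minimal subsetI)
  then show ?thesis using span_simple by auto
qed

lemma independent_simple_coroots: "independent (coroot ` Sm)"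
proof (rule card_le_dim_spanning[of _ UNIV])
  have "card (coroot ` Sm) = dim (span Sm)"
    using card_image[OF inj_on_coroot_simple] dim_span_eq_card_independent[OF independent_simple] by simp
  then show "card (coroot ` Sm) \<le> dim (UNIV :: 'a set)" using span_simple by simp
qed (use finite_simple span_simple_coroots in auto)

lemma cocoeff_eq_coeff: assumes b: "b \<in> Sm" shows "cocoeff b v = coeff b v * (b \<bullet> b) / 2"
proof -
  define f where "f x = (if x \<in> coroot ` Sm then coeff (coroot x) v * (coroot x \<bullet> coroot x) / 2 else 0)"
    for x
  have "(\<Sum>x\<in>coroot ` Sm. f x *\<^sub>R x) = (\<Sum>c\<in>Sm. f (coroot c) *\<^sub>R coroot c)"
    using sum.reindex[OF inj_on_coroot_simple] by simp
  also have "\<dots> = (\<Sum>c\<in>Sm. coeff c v *\<^sub>R c)"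
  proof (rule sum.cong)
    fix c assume c: "c \<in> Sm"
    then have "c \<noteq> 0" "c \<bullet> c \<noteq> 0" using root_nonzero[OF simple_in_R[OF c]] by simp_all
    then show "f (coroot c) *\<^sub>R coroot c = coeff c v *\<^sub>R c"
      using c by (simp add: f_def coroot_coroot coroot_def field_simps)
  qed simp
  finally have "representation (coroot ` Sm) v = f"
    using finite_simple independent_simple_coroots span_simple_coroots sum_coeff
    by (intro representation_eq_sum) (auto simp: f_def)
  then show ?thesis using b root_nonzero[OF simple_in_R[OF b]] by (simp add: cocoeff_def f_def coroot_coroot)
qed

lemma root_le_coroots_iff: "root_le (coroot ` Sm) x y \<longleftrightarrow> (\<forall>b\<in>Sm. cocoeff b (y - x) \<in> \<nat>)"
  using nn_comb_iff_representation[OF _ independent_simple_coroots span_simple_coroots] finite_simple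
  by (simp add: root_le_def cocoeff_def)

lemma cocoeff_diff: "b \<in> Sm \<Longrightarrow> cocoeff b (x - y) = cocoeff b x - cocoeff b y"
  by (simp add: cocoeff_eq_coeff coeff_diff algebra_simps diff_divide_distrib)

lemma cocoeff_scale: "b \<in> Sm \<Longrightarrow> cocoeff b (c *\<^sub>R x) = c * cocoeff b x"
  by (simp add: cocoeff_eq_coeff coeff_scale)

lemma sum_cocoeff: "(\<Sum>b\<in>Sm. cocoeff b v *\<^sub>R coroot b) = v"
proof -
  have "cocoeff b v *\<^sub>R coroot b = coeff b v *\<^sub>R b" if "b \<in> Sm" for b
    using that root_nonzero[OF simple_in_R[OF that]] by (simp add: cocoeff_eq_coeff coroot_def)
  then show ?thesis using sum_coeff by (simp cong: sum.cong)
qed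

lemma cocoeff_simple_coroot: "b \<in> Sm \<Longrightarrow> c \<in> Sm \<Longrightarrow> cocoeff b (coroot c) = (if b = c then 1 else 0)"
  using root_nonzero[OF simple_in_R] by (simp add: cocoeff_eq_coeff coroot_def coeff_scale coeff_simple)

lemma cocoeff_inject: "(\<And>b. b \<in> Sm \<Longrightarrow> cocoeff b x = cocoeff b y) \<Longrightarrow> x = y"
  by (metis (no_types, lifting) sum.cong sum_cocoeff)

definition coheight :: "'a \<Rightarrow> real" where "coheight x = (\<Sum>b\<in>Sm. cocoeff b x)"

lemma coheight_less:
  assumes le: "root_le (coroot ` Sm) y x" and ne: "y \<noteq> x" shows "coheight y < coheight x"
proof -
  have nn: "\<forall>b\<in>Sm. cocoeff b (x - y) \<ge> 0" using le Nats_nonneg by (simp add: root_le_coroots_iff)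
  obtain b where b: "b \<in> Sm" "cocoeff b (x - y) \<noteq> 0" using ne cocoeff_inject[of x y] cocoeff_diff by force
  have "0 < (\<Sum>b\<in>Sm. cocoeff b (x - y))"
    using b nn finite_simple by (intro sum_pos2[of _ b]) auto
  then show ?thesis by (simp add: coheight_def cocoeff_diff sum_subtractf)
qed

lemma cocoeff_coroot: "b \<in> Sm \<Longrightarrow> cocoeff b (coroot \<beta>) = coeff b \<beta> * (b \<bullet> b) / (\<beta> \<bullet> \<beta>)"
  by (simp add: cocoeff_eq_coeff coroot_def coeff_scale)

lemma coeff_coroot: "coeff c (coroot v) = (2 / (v \<bullet> v)) * coeff c v"
  by (simp add: coroot_def coeff_scale)

lemma cocoeff_Ints_refl:
  assumes c: "c \<in> Sm" and h: "\<forall>d\<in>Sm. cocoeff d v \<in> \<int>"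
  shows "\<forall>b\<in>Sm. cocoeff b (refl c v) \<in> \<int>"
proof
  fix b assume b: "b \<in> Sm"
  have "coroot d \<bullet> c \<in> \<int>" if "d \<in> Sm" for d
    using pairing_Ints[OF simple_in_R[OF that] simple_in_R[OF c]] by (simp add: inner_commute inner_coroot)
  then have "(\<Sum>d\<in>Sm. cocoeff d v * (coroot d \<bullet> c)) \<in> \<int>" using h by (auto intro: Ints_sum)
  moreover have "v \<bullet> c = (\<Sum>d\<in>Sm. cocoeff d v * (coroot d \<bullet> c))"
    using sum_cocoeff[of v] by (metis (no_types, lifting) inner_scaleR_left inner_sum_left sum.cong)
  ultimately have "v \<bullet> c \<in> \<int>" by simp
  then show "cocoeff b (refl c v) \<in> \<int>"
    using h b c by (simp add: refl_eq_pairing_coroot cocoeff_diff cocoeff_scale cocoeff_simple_coroot)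
qed

lemma coroot_cocoeff_Ints: assumes "\<beta> \<in> R" shows "\<forall>d\<in>Sm. cocoeff d (coroot \<beta>) \<in> \<int>"
proof -
  obtain ws a where ws: "set ws \<subseteq> Sm" "a \<in> Sm" "\<beta> = word_map ws a"
    using root_conj_simple[OF assms] by blast
  have "coroot \<beta> = word_map ws (coroot a)"
    using ws(3) coroot_conj[OF orthogonal_transformation_word_map] by simp
  moreover have "\<forall>d\<in>Sm. cocoeff d (word_map ws (coroot a)) \<in> \<int>" using ws(1)
    by (induction ws) (use ws(2) in \<open>auto simp: cocoeff_simple_coroot intro: cocoeff_Ints_refl[rule_format]\<close>)
  ultimately show ?thesis by simp
qed

lemma pos_coroot_cocoeff_Nats: assumes "\<beta> \<in> P" shows "\<forall>d\<in>Sm. cocoeff d (coroot \<beta>) \<in> \<nat>"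
proof
  fix d assume d: "d \<in> Sm"
  have "cocoeff d (coroot \<beta>) \<ge> 0"
    using cocoeff_coroot[OF d] assms d inner_self_root_pos[OF pos_root_in_R[OF assms]] by (simp add: pos_roots_iff)
  then show "cocoeff d (coroot \<beta>) \<in> \<nat>"
    using coroot_cocoeff_Ints[OF pos_root_in_R[OF assms]] d by (simp add: Nats_altdef2)
qed

lemma cocoeff_coroot_sign:
  assumes "d \<in> Sm" "\<beta> \<in> R"
  shows "cocoeff d (coroot \<beta>) > 0 \<longleftrightarrow> coeff d \<beta> > 0"
    and "cocoeff d (coroot \<beta>) < 0 \<longleftrightarrow> coeff d \<beta> < 0"
    and "cocoeff d (coroot \<beta>) = 0 \<longleftrightarrow> coeff d \<beta> = 0"
proof -
  define q where "q = (d \<bullet> d) / (\<beta> \<bullet> \<beta>)"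
  have "q > 0" using inner_self_root_pos assms simple_in_R by (auto simp: q_def)
  moreover have "cocoeff d (coroot \<beta>) = coeff d \<beta> * q"
    using cocoeff_coroot[OF assms(1)] by (simp add: q_def)
  ultimately show "cocoeff d (coroot \<beta>) > 0 \<longleftrightarrow> coeff d \<beta> > 0"
    and "cocoeff d (coroot \<beta>) < 0 \<longleftrightarrow> coeff d \<beta> < 0"
    and "cocoeff d (coroot \<beta>) = 0 \<longleftrightarrow> coeff d \<beta> = 0"
    by (simp_all add: zero_less_mult_iff mult_less_0_iff)
qed

lemma nn_comb_pos_root: "\<beta> \<in> P \<Longrightarrow> nn_comb Sm \<beta>"
  by (simp add: pos_roots_def)

lemma nn_comb_scale_Nats: "k \<in> \<nat> \<Longrightarrow> nn_comb Sm x \<Longrightarrow> nn_comb Sm (k *\<^sub>R x)"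
  by (simp add: nn_comb_simple_iff coeff_scale Nats_mult)

lemma linear_cocoeff: "b \<in> Sm \<Longrightarrow> linear (cocoeff b)"
  by (rule linearI) (simp_all add: cocoeff_eq_coeff coeff_add coeff_scale add_divide_distrib algebra_simps)

lemma inner_coroots_inject:
  assumes "\<And>b. b \<in> Sm \<Longrightarrow> x \<bullet> coroot b = y \<bullet> coroot b" shows "x = y"
proof -
  have "(x - y) \<bullet> (\<Sum>b\<in>Sm. cocoeff b (x - y) *\<^sub>R coroot b) = 0"
    using assms by (simp add: inner_sum_right inner_diff_left)
  then show ?thesis by (simp add: sum_cocoeff)
qed

lemma coeff_coroot_sign:
  assumes "\<beta> \<in> R"
  shows coeff_coroot_nonneg_iff: "0 \<le> coeff c (coroot \<beta>) \<longleftrightarrow> 0 \<le> coeff c \<beta>"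
    and coeff_coroot_nonpos_iff: "coeff c (coroot \<beta>) \<le> 0 \<longleftrightarrow> coeff c \<beta> \<le> 0"
proof -
  define q where "q = 2 / (\<beta> \<bullet> \<beta>)"
  have "q > 0" "coeff c (coroot \<beta>) = q * coeff c \<beta>"
    using inner_self_root_pos[OF assms] by (simp_all add: q_def coeff_coroot)
  then show "0 \<le> coeff c (coroot \<beta>) \<longleftrightarrow> 0 \<le> coeff c \<beta>"
    and "coeff c (coroot \<beta>) \<le> 0 \<longleftrightarrow> coeff c \<beta> \<le> 0"
    by (simp_all add: zero_le_mult_iff mult_le_0_iff)
qed

lemma inversions_refl_comp:
  assumes w: "w \<in> W" and a: "a \<in> Sm" and e: "\<epsilon> \<in> R" "w \<epsilon> = a"
  shows "inversions (refl a \<circ> w) = (if \<epsilon> \<in> P then insert \<epsilon> (inversions w) else inversions w - {- \<epsilon>})"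
proof -
  have iff: "\<beta> \<in> inversions (refl a \<circ> w) \<longleftrightarrow> \<beta> \<in> P \<and> (w \<beta> \<notin> P \<or> \<beta> = \<epsilon>) \<and> \<beta> \<noteq> - \<epsilon>" for \<beta>
  proof (cases "\<beta> \<in> P")
    case True
    have "w \<beta> = a \<longleftrightarrow> \<beta> = \<epsilon>" "w \<beta> = - a \<longleftrightarrow> \<beta> = - \<epsilon>"
      unfolding e(2)[symmetric] by (simp_all add: W_uminus[OF w, symmetric] inj_eq[OF inj_W[OF w]])
    have "\<beta> \<in> inversions (refl a \<circ> w) \<longleftrightarrow> refl a (w \<beta>) \<notin> P"
      using True by (simp add: inversions_def)
    also have "\<dots> \<longleftrightarrow> \<not> ((w \<beta> \<in> P \<and> w \<beta> \<noteq> a) \<or> w \<beta> = - a)"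
      using refl_simple_pos_iff[OF a W_maps_R[OF w pos_root_in_R[OF True]]] by simp
    also have "\<dots> \<longleftrightarrow> (w \<beta> \<notin> P \<or> \<beta> = \<epsilon>) \<and> \<beta> \<noteq> - \<epsilon>"
      using \<open>w \<beta> = a \<longleftrightarrow> \<beta> = \<epsilon>\<close> \<open>w \<beta> = - a \<longleftrightarrow> \<beta> = - \<epsilon>\<close> by blast
    finally show ?thesis using True by simp
  qed (simp add: inversions_def)
  have inv_w: "\<beta> \<in> inversions w \<longleftrightarrow> \<beta> \<in> P \<and> w \<beta> \<notin> P" for \<beta>
    by (simp add: inversions_def)
  show ?thesis
  proof (cases "\<epsilon> \<in> P")
    case True
    then have "- \<epsilon> \<notin> P" "w \<epsilon> \<in> P" using uminus_not_pos simple_pos[OF a] e(2) by auto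
    then show ?thesis using True by (auto simp only: iff inv_w if_True)
  next
    case False
    then show ?thesis by (auto simp only: iff inv_w if_False)
  qed
qed

lemma root_le_coroots_if_diff_pos_coroot:
  "\<sigma> \<in> P \<Longrightarrow> y - x = coroot \<sigma> \<Longrightarrow> root_le (coroot ` Sm) x y"
  using pos_coroot_cocoeff_Nats by (simp add: root_le_coroots_iff)

lemma dual_pairing_eq_1:
  assumes b: "\<beta> \<in> R" and e: "\<epsilon> \<in> R" and ne: "\<beta> \<noteq> \<epsilon>" and two: "2 * (\<epsilon> \<bullet> \<beta>) / (\<beta> \<bullet> \<beta>) = 2"
  shows "\<beta> \<bullet> coroot \<epsilon> = 1"
proof -
  define k where "k = \<beta> \<bullet> coroot \<epsilon>"
  have bb: "\<beta> \<bullet> \<beta> > 0" and ee: "\<epsilon> \<bullet> \<epsilon> > 0" using inner_self_root_pos b e by auto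
  have be: "\<beta> \<bullet> \<epsilon> = \<beta> \<bullet> \<beta>" using two bb by (simp add: inner_commute field_simps)
  have "0 < (\<epsilon> - \<beta>) \<bullet> (\<epsilon> - \<beta>)" using ne by simp
  also have "\<dots> = \<epsilon> \<bullet> \<epsilon> - \<beta> \<bullet> \<beta>"
    using be by (simp add: inner_diff_left inner_diff_right inner_commute)
  finally have "k * (\<epsilon> \<bullet> \<epsilon>) < 2 * (\<epsilon> \<bullet> \<epsilon>)"
    using be ee by (simp add: k_def inner_coroot)
  then have "k < 2" using ee by (simp add: mult_less_cancel_right_pos)
  moreover have "k \<in> \<int>" using pairing_Ints[OF e b] by (simp add: k_def inner_coroot)
  moreover have "k > 0" using be bb ee by (simp add: k_def inner_coroot)
  ultimately have "k = 1" using Ints_pos_ge_1 Ints_between_1_2 by force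
  then show ?thesis by (simp add: k_def)
qed

end

locale fundamental_weight = based_root_system +
  fixes ai :: 'a
  assumes ai: "ai \<in> Sm"
begin

abbreviation \<omega> where "\<omega> \<equiv> fund_weight Sm ai"

abbreviation \<Lambda> where "\<Lambda> \<equiv> weights_irrep R Sm \<omega>"

abbreviation J where "J \<equiv> Sm - {ai}"

lemma fund_weight_inner: "\<omega> \<bullet> x = cocoeff ai x"
proof -
  define v where "v = adjoint (cocoeff ai) 1"
  have v: "v \<bullet> x = cocoeff ai x" for x
    using adjoint_works[OF linear_cocoeff[OF ai], of x 1] by (simp add: v_def inner_commute)
  have v_coroot: "v \<bullet> coroot b = (if b = ai then 1 else 0)" if "b \<in> Sm" for b
    using v cocoeff_simple_coroot[OF ai that] by auto
  have "\<omega> = v"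
    unfolding fund_weight_def
  proof (rule the_equality)
    show "\<forall>b\<in>Sm. 2 * (v \<bullet> b) / (b \<bullet> b) = (if b = ai then 1 else 0)"
      using v_coroot by (simp add: inner_coroot)
    fix u assume "\<forall>b\<in>Sm. 2 * (u \<bullet> b) / (b \<bullet> b) = (if b = ai then 1 else 0)"
    then show "u = v" using v_coroot by (intro inner_coroots_inject) (simp add: inner_coroot)
  qed
  then show ?thesis using v by simp
qed

lemma fund_weight_coroot: "b \<in> Sm \<Longrightarrow> \<omega> \<bullet> coroot b = (if b = ai then 1 else 0)"
  using fund_weight_inner cocoeff_simple_coroot ai by simp

lemma refl_simple_fund_weight: "b \<in> Sm \<Longrightarrow> refl b \<omega> = \<omega> - (if b = ai then b else 0)"
  by (simp add: refl_eq_coroot_pairing fund_weight_coroot)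

lemma fund_weight_coroot_Ints: "\<beta> \<in> R \<Longrightarrow> \<omega> \<bullet> coroot \<beta> \<in> \<int>"
  using coroot_cocoeff_Ints ai by (simp add: fund_weight_inner)

lemma fund_weight_dominant: "w \<in> W \<Longrightarrow> root_le Sm (w \<omega>) \<omega>"
proof (induction w rule: W_length_induct)
  case id
  then show ?case by (simp add: root_le_refl)
next
  case (step u a)
  have eq: "\<omega> - (u \<circ> refl a) \<omega> = (\<omega> - u \<omega>) + (if a = ai then u a else 0)"
    using refl_simple_fund_weight[OF step.hyps(2)] linear_W[OF step.hyps(1)]
    by (simp add: linear_diff linear_0)
  have "nn_comb Sm (if a = ai then u a else 0)"
    using nn_comb_pos_root[OF step.hyps(3)] nn_comb_zero by (cases "a = ai") simp_all
  then show ?case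
    unfolding root_le_def eq using step.IH by (intro nn_comb_add) (simp_all add: root_le_def)
qed

lemma weights_iff: "\<mu> \<in> \<Lambda> \<longleftrightarrow> (\<forall>w\<in>W. root_le Sm (w \<mu>) \<omega>)"
  by (simp add: weights_irrep_def weyl_eq_W)

lemma fund_weight_in_weights: "\<omega> \<in> \<Lambda>"
  using fund_weight_dominant weights_iff by blast

lemma weights_W_closed: "\<mu> \<in> \<Lambda> \<Longrightarrow> w \<in> W \<Longrightarrow> w \<mu> \<in> \<Lambda>"
  unfolding weights_iff by (metis comp_apply comp_in_gen_group)

lemma fund_weight_minus_root_in_weights:
  assumes b: "\<beta> \<in> R" and k: "\<omega> \<bullet> coroot \<beta> \<ge> 1"
  shows "\<omega> - \<beta> \<in> \<Lambda>"
  unfolding weights_iff root_le_def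
proof
  fix w assume w: "w \<in> W"
  have e: "\<omega> - w (\<omega> - \<beta>) = (\<omega> - w \<omega>) + w \<beta>" by (simp add: linear_diff[OF linear_W[OF w]])
  show "nn_comb Sm (\<omega> - w (\<omega> - \<beta>))"
  proof (cases "w \<beta> \<in> P")
    case True
    then have "nn_comb Sm ((\<omega> - w \<omega>) + w \<beta>)"
      using fund_weight_dominant[OF w] nn_comb_pos_root[OF True]
      by (intro nn_comb_add) (simp_all add: root_le_def)
    then show ?thesis by (simp only: e)
  next
    case False
    define k where "k = \<omega> \<bullet> coroot \<beta>"
    have "- w \<beta> \<in> P" using False not_pos_iff W_maps_R[OF w b] by auto
    moreover have "k - 1 \<in> \<nat>" using fund_weight_coroot_Ints[OF b] k by (simp add: k_def Nats_altdef2)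
    ultimately have "nn_comb Sm ((k - 1) *\<^sub>R (- w \<beta>))" using nn_comb_scale_Nats nn_comb_pos_root by blast
    moreover have "nn_comb Sm (\<omega> - (w \<circ> refl \<beta>) \<omega>)"
      using fund_weight_dominant[OF comp_in_gen_group[OF w refl_root_in_W[OF b]]]
      by (simp only: root_le_def)
    moreover have "\<omega> - w (\<omega> - \<beta>) = (\<omega> - (w \<circ> refl \<beta>) \<omega>) + (k - 1) *\<^sub>R (- w \<beta>)"
      using e linear_W[OF w]
      by (simp add: refl_eq_coroot_pairing k_def linear_diff linear_scale algebra_simps)
    ultimately show ?thesis using nn_comb_add by metis
  qed
qed

end

locale minuscule_weight = fundamental_weight +
  assumes minuscule: "minuscule R Sm ai"
begin

lemma weights_orbit: "\<mu> \<in> \<Lambda> \<Longrightarrow> \<exists>w\<in>W. w \<omega> = \<mu>"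
  using minuscule fund_weight_in_weights unfolding minuscule_def weyl_eq_W by blast

lemma weights_norm: "\<mu> \<in> \<Lambda> \<Longrightarrow> \<mu> \<bullet> \<mu> = \<omega> \<bullet> \<omega>"
  using weights_orbit orthogonal_transformation_W by (metis orthogonal_transformation_def)

lemma fund_weight_coroot_less_2: assumes b: "\<beta> \<in> R" shows "\<omega> \<bullet> coroot \<beta> < 2"
proof (rule ccontr)
  define k where "k = \<omega> \<bullet> coroot \<beta>"
  assume "\<not> ?thesis"
  then have k: "k \<ge> 2" by (simp add: k_def)
  have "\<omega> \<bullet> \<beta> = k * (\<beta> \<bullet> \<beta>) / 2" using inner_self_root_pos[OF b] by (simp add: k_def inner_coroot)
  then have "(\<omega> - \<beta>) \<bullet> (\<omega> - \<beta>) = \<omega> \<bullet> \<omega> + (1 - k) * (\<beta> \<bullet> \<beta>)"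
    by (simp add: inner_diff_left inner_diff_right inner_commute algebra_simps)
  moreover have "\<omega> - \<beta> \<in> \<Lambda>" using fund_weight_minus_root_in_weights[OF b] k by (simp add: k_def)
  ultimately have "(1 - k) * (\<beta> \<bullet> \<beta>) = 0" using weights_norm by simp
  then show False using inner_self_root_pos[OF b] k by simp
qed

lemma fund_weight_coroot_range: assumes "\<beta> \<in> R" shows "\<omega> \<bullet> coroot \<beta> \<in> {-1, 0, 1}"
proof -
  have "\<omega> \<bullet> coroot \<beta> < 2" "\<omega> \<bullet> coroot (- \<beta>) < 2"
    using fund_weight_coroot_less_2 assms uminus_in_R by blast+
  moreover obtain z where z: "\<omega> \<bullet> coroot \<beta> = of_int z"
    using fund_weight_coroot_Ints[OF assms] by (auto elim: Ints_cases)
  ultimately have "z \<in> {-1, 0, 1}" by (auto simp: coroot_uminus)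
  then show ?thesis using z by auto
qed

lemma fund_weight_coroot_eq_iff:
  assumes "\<beta> \<in> R"
  shows "\<omega> \<bullet> coroot \<beta> = 1 \<longleftrightarrow> coeff ai \<beta> > 0"
    and "\<omega> \<bullet> coroot \<beta> = -1 \<longleftrightarrow> coeff ai \<beta> < 0"
    and "\<omega> \<bullet> coroot \<beta> = 0 \<longleftrightarrow> coeff ai \<beta> = 0"
  using fund_weight_coroot_range[OF assms] cocoeff_coroot_sign[OF ai assms]
  by (auto simp: fund_weight_inner)

section \<open>Minimal representatives\<close>

definition is_min_rep :: "('a \<Rightarrow> 'a) \<Rightarrow> 'a \<Rightarrow> bool" where
  "is_min_rep w \<mu> \<longleftrightarrow> w \<in> W \<and> w \<omega> = \<mu> \<and> (\<forall>b\<in>J. w b \<in> P)"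

lemma refl_J_fund_weight: "b \<in> J \<Longrightarrow> refl b \<omega> = \<omega>"
  using refl_simple_fund_weight by auto

lemma is_min_rep_exists: assumes "\<mu> \<in> \<Lambda>" shows "\<exists>w. is_min_rep w \<mu>"
proof -
  obtain u where "u \<in> W" "u \<omega> = \<mu>" using weights_orbit[OF assms] by blast
  then obtain w where w: "w \<in> W" "w \<omega> = \<mu>"
    and min: "\<And>v. v \<in> W \<Longrightarrow> v \<omega> = \<mu> \<Longrightarrow> n_inversions w \<le> n_inversions v"
    using ex_has_least_nat[of "\<lambda>w. w \<in> W \<and> w \<omega> = \<mu>" u n_inversions] by blast
  have "w b \<in> P" if b: "b \<in> J" for b
  proof (rule ccontr)
    assume wb: "w b \<notin> P"
    then have "n_inversions (w \<circ> refl b) = n_inversions w - 1"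
      using n_inversions_comp_refl b w(1) by auto
    moreover have "b \<in> inversions w" using wb simple_pos b by (simp add: inversions_def)
    then have "n_inversions w \<noteq> 0" using finite_inversions by (auto simp: n_inversions_def)
    moreover have "w \<circ> refl b \<in> W" using comp_in_gen_group[OF w(1) refl_in_gen_group] b by auto
    ultimately show False using min[of "w \<circ> refl b"] w(2) refl_J_fund_weight[OF b] by simp
  qed
  then show ?thesis using w by (auto simp: is_min_rep_def)
qed

lemma is_min_rep_pos:
  assumes "is_min_rep w \<mu>" "\<beta> \<in> P" "coeff ai \<beta> = 0" shows "w \<beta> \<in> P"
proof (rule pos_image_if_support_pos[OF _ assms(2)])
  have wW: "w \<in> W" using assms(1) by (simp add: is_min_rep_def)
  show "linear w" using linear_W[OF wW] .
  show "w \<beta> \<in> R" using W_maps_R[OF wW pos_root_in_R[OF assms(2)]] .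
  fix d assume "d \<in> Sm" "coeff d \<beta> \<noteq> 0"
  then show "w d \<in> P" using assms(1,3) by (auto simp: is_min_rep_def)
qed

lemma is_min_rep_not_pos:
  assumes "is_min_rep w \<mu>" "\<beta> \<in> R" "\<beta> \<notin> P" "coeff ai \<beta> = 0" shows "w \<beta> \<notin> P"
proof -
  have "w (- \<beta>) \<in> P"
    using is_min_rep_pos[OF assms(1)] not_pos_iff assms(2-4) by (simp add: coeff_uminus)
  then show ?thesis
    using uminus_not_pos W_uminus assms(1) by (fastforce simp: is_min_rep_def)
qed

lemma J_stabilizes_fund_weight: "u \<in> gen_group J \<Longrightarrow> u \<omega> = \<omega>"
  using gen_group_fixes refl_J_fund_weight by blast

lemma stabilizer_fund_weight: "u \<in> W \<Longrightarrow> u \<omega> = \<omega> \<Longrightarrow> u \<in> gen_group J"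
proof (induction u rule: W_length_induct)
  case id
  show ?case by (rule id_in_gen_group)
next
  case (step u a)
  have "orthogonal_transformation (u \<circ> refl a)"
    using orthogonal_transformation_W comp_in_gen_group[OF step.hyps(1) refl_in_gen_group[OF step.hyps(2)]] .
  then have "\<omega> \<bullet> a = (u \<circ> refl a) \<omega> \<bullet> (u \<circ> refl a) a"
    by (simp only: orthogonal_transformation_def)
  also have "\<dots> = \<omega> \<bullet> u (- a)" using step.prems by (simp add: refl_self)
  also have "\<dots> = - cocoeff ai (u a)"
    by (simp add: W_uminus[OF step.hyps(1)] fund_weight_inner)
  also have "\<dots> \<le> 0"
    using step.hyps(3) ai by (simp add: cocoeff_eq_coeff pos_roots_iff)
  finally have "\<omega> \<bullet> a \<le> 0" .
  moreover have "\<omega> \<bullet> ai > 0"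
    using root_nonzero[OF simple_in_R[OF ai]] by (simp add: fund_weight_inner cocoeff_eq_coeff[OF ai] coeff_simple[OF ai])
  ultimately have "a \<in> J" using step.hyps(2) by auto
  then have "u \<omega> = \<omega>" using step.prems refl_J_fund_weight by simp
  then show ?case using step.IH refl_in_gen_group[OF \<open>a \<in> J\<close>] comp_in_gen_group by blast
qed

lemma is_min_rep_unique: assumes w: "is_min_rep w \<mu>" and v: "is_min_rep v \<mu>" shows "w = v"
proof -
  have wW: "w \<in> W" and vW: "v \<in> W" using w v by (auto simp: is_min_rep_def)
  obtain w' where w': "w' \<in> W" "\<And>x. w' (w x) = x" "\<And>x. w (w' x) = x"
    using inverse_in_gen_group[OF wW] by blast
  define u where "u = w' \<circ> v"
  have uW: "u \<in> W" unfolding u_def using comp_in_gen_group[OF w'(1) vW] .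
  have "u \<omega> = \<omega>" using w v w'(2) by (simp add: u_def is_min_rep_def) metis
  then have uJ: "u \<in> gen_group J" using stabilizer_fund_weight uW by blast
  \<comment> \<open>If u \<noteq> id it makes some simple root negative; that root lies in J, and v = w u sends it
    to a negative root, contradicting minimality of v.\<close>
  have "u = id"
  proof (rule ccontr)
    assume "u \<noteq> id"
    then obtain a where a: "a \<in> Sm" "u a \<notin> P"
      using n_inversions_eq_0_imp_id[OF uW] simple_inversion_exists[OF uW] by blast
    have c: "coeff ai (u a) = coeff ai a"
      using coeff_gen_group_invariant[OF _ uJ, of ai] ai by auto
    have uaR: "u a \<in> R" using W_maps_R[OF uW simple_in_R[OF a(1)]] .
    show False
    proof (cases "a = ai")
      case True
      then show False using c pos_if_coeff_pos[OF uaR, of ai] a(2) coeff_simple[OF ai, of ai] by simp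
    next
      case False
      then have "w (u a) \<notin> P" using is_min_rep_not_pos[OF w uaR a(2)] c a(1) by (simp add: coeff_simple)
      moreover have "w (u a) = v a" using w'(3) by (simp add: u_def)
      ultimately show False using v a(1) False by (simp add: is_min_rep_def)
    qed
  qed
  then show ?thesis by (metis comp_apply id_apply u_def w'(3) ext)
qed

definition min_rep :: "'a \<Rightarrow> ('a \<Rightarrow> 'a)" where "min_rep \<mu> = (THE w. is_min_rep w \<mu>)"

lemma min_rep_eqI: "is_min_rep w \<mu> \<Longrightarrow> min_rep \<mu> = w"
  unfolding min_rep_def using is_min_rep_unique by blast

lemma is_min_rep_min_rep: "\<mu> \<in> \<Lambda> \<Longrightarrow> is_min_rep (min_rep \<mu>) \<mu>"
  using is_min_rep_exists min_rep_eqI by metis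

section \<open>The ideal of inversions\<close>

abbreviation Q where "Q \<equiv> coroot_class R Sm ai"

definition class_roots :: "'a set" where "class_roots = {\<beta>\<in>P. coeff ai \<beta> > 0}"

lemma class_roots_in_R: "\<beta> \<in> class_roots \<Longrightarrow> \<beta> \<in> R"
  by (simp add: class_roots_def pos_root_in_R)

lemma coroot_class_eq: "Q = coroot ` class_roots"
proof -
  have "\<forall>\<beta>\<in>P. cocoeff ai (coroot \<beta>) = 1 \<longleftrightarrow> coeff ai \<beta> > 0"
    using fund_weight_coroot_eq_iff(1) pos_root_in_R by (simp add: fund_weight_inner)
  then show ?thesis unfolding coroot_class_def class_roots_def cocoeff_def[symmetric] by auto
qed

lemma coroot_classE:
  assumes "\<gamma> \<in> Q" obtains \<beta> where "\<beta> \<in> class_roots" "\<gamma> = coroot \<beta>" "coroot \<gamma> = \<beta>"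
proof -
  obtain \<beta> where "\<beta> \<in> class_roots" "\<gamma> = coroot \<beta>" using assms coroot_class_eq by blast
  moreover have "coroot \<gamma> = \<beta>"
    using calculation coroot_coroot[OF root_nonzero[OF class_roots_in_R]] by simp
  ultimately show thesis by (rule that)
qed

lemma cocoeff_coroot_class: "\<gamma> \<in> Q \<Longrightarrow> cocoeff ai \<gamma> = 1"
  by (simp add: coroot_class_def cocoeff_def)

lemma finite_coroot_class: "finite Q"
  using coroot_class_eq finite_P by (simp add: class_roots_def)

lemma pairing_transfer:
  assumes "w \<in> W" "w \<omega> = \<mu>" shows "\<mu> \<bullet> coroot (w \<epsilon>) = \<omega> \<bullet> coroot \<epsilon>"
proof -
  have "orthogonal_transformation w" using orthogonal_transformation_W[OF assms(1)] .
  then have "w \<omega> \<bullet> w (coroot \<epsilon>) = \<omega> \<bullet> coroot \<epsilon>" "coroot (w \<epsilon>) = w (coroot \<epsilon>)"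
    by (simp_all add: orthogonal_transformation_def coroot_conj)
  then show ?thesis using assms(2) by simp
qed

lemma inversions_min_rep_subset: assumes "is_min_rep w \<mu>" shows "inversions w \<subseteq> class_roots"
proof
  fix \<beta> assume "\<beta> \<in> inversions w"
  then have "\<beta> \<in> P" "w \<beta> \<notin> P" by (auto simp: inversions_def)
  then have "coeff ai \<beta> \<noteq> 0" using is_min_rep_pos[OF assms] by auto
  moreover have "coeff ai \<beta> \<ge> 0" using \<open>\<beta> \<in> P\<close> ai by (simp add: pos_roots_iff)
  ultimately show "\<beta> \<in> class_roots" using \<open>\<beta> \<in> P\<close> by (simp add: class_roots_def)
qed

definition ideal_of :: "'a \<Rightarrow> 'a set" where "ideal_of \<mu> = coroot ` inversions (min_rep \<mu>)"

lemma mem_ideal_of: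
  assumes "\<mu> \<in> \<Lambda>" shows "\<gamma> \<in> ideal_of \<mu> \<longleftrightarrow> \<gamma> \<in> Q \<and> min_rep \<mu> (coroot \<gamma>) \<notin> P"
proof
  assume "\<gamma> \<in> ideal_of \<mu>"
  then obtain \<beta> where b: "\<beta> \<in> inversions (min_rep \<mu>)" "\<gamma> = coroot \<beta>" by (auto simp: ideal_of_def)
  then have "\<beta> \<in> class_roots" using inversions_min_rep_subset[OF is_min_rep_min_rep[OF assms]] by blast
  then have "\<gamma> \<in> Q" "coroot \<gamma> = \<beta>"
    using b(2) coroot_class_eq coroot_coroot[OF root_nonzero[OF class_roots_in_R]] by auto
  then show "\<gamma> \<in> Q \<and> min_rep \<mu> (coroot \<gamma>) \<notin> P" using b(1) by (simp add: inversions_def)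
next
  assume h: "\<gamma> \<in> Q \<and> min_rep \<mu> (coroot \<gamma>) \<notin> P"
  then obtain \<beta> where "\<beta> \<in> class_roots" "\<gamma> = coroot \<beta>" "coroot \<gamma> = \<beta>" by (blast elim: coroot_classE)
  then have "\<beta> \<in> inversions (min_rep \<mu>)" "\<gamma> = coroot \<beta>"
    using h by (simp_all add: inversions_def class_roots_def)
  then show "\<gamma> \<in> ideal_of \<mu>" by (simp add: ideal_of_def)
qed

lemma ideal_of_subset: "\<mu> \<in> \<Lambda> \<Longrightarrow> ideal_of \<mu> \<subseteq> Q"
  using mem_ideal_of by blast

lemma finite_ideal_of: "\<mu> \<in> \<Lambda> \<Longrightarrow> finite (ideal_of \<mu>)"
  using finite_coroot_class ideal_of_subset finite_subset by blast

text \<open>Writing x - y in simple coroots, the coefficient of ai^\<or> vanishes and every other simple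
  coroot is sent by the minimal representative to a positive coroot; so w y = w x - (w (x - y))
  has only nonpositive coefficients.\<close>

lemma ideal_of_lower_closed:
  assumes m: "\<mu> \<in> \<Lambda>" and x: "x \<in> ideal_of \<mu>" and y: "y \<in> Q"
    and le: "root_le (coroot ` Sm) y x"
  shows "y \<in> ideal_of \<mu>"
proof -
  define w where "w = min_rep \<mu>"
  have w: "is_min_rep w \<mu>" using is_min_rep_min_rep[OF m] by (simp add: w_def)
  then have wW: "w \<in> W" by (simp add: is_min_rep_def)
  have xQ: "x \<in> Q" and wx: "w (coroot x) \<notin> P" using x mem_ideal_of[OF m] by (auto simp: w_def)
  obtain \<beta>x where hx: "\<beta>x \<in> class_roots" "x = coroot \<beta>x" "coroot x = \<beta>x" using coroot_classE[OF xQ] .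
  obtain \<beta>y where hy: "\<beta>y \<in> class_roots" "y = coroot \<beta>y" "coroot y = \<beta>y" using coroot_classE[OF y] .
  have oW: "orthogonal_transformation w" using orthogonal_transformation_W[OF wW] .
  have "w (x - y) = w (\<Sum>b\<in>Sm. cocoeff b (x - y) *\<^sub>R coroot b)" by (simp add: sum_cocoeff)
  also have "\<dots> = (\<Sum>b\<in>Sm. cocoeff b (x - y) *\<^sub>R w (coroot b))"
    by (simp add: linear_sum[OF linear_W[OF wW]] linear_scale[OF linear_W[OF wW]])
  finally have wy: "w y = w x - (\<Sum>b\<in>Sm. cocoeff b (x - y) *\<^sub>R w (coroot b))"
    by (simp add: linear_diff[OF linear_W[OF wW]] algebra_simps)
  have "coeff c (w y) \<le> 0" for c
  proof -
    have "w x = coroot (w \<beta>x)" using hx(2) coroot_conj[OF oW] by simp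
    then have "coeff c (w x) \<le> 0"
      using coeff_coroot_nonpos_iff coeff_not_pos_nonpos W_maps_R[OF wW class_roots_in_R[OF hx(1)]] wx hx(3)
      by simp
    moreover have "0 \<le> cocoeff b (x - y) * coeff c (w (coroot b))" if b: "b \<in> Sm" for b
    proof (cases "b = ai")
      case False
      then have "w b \<in> P" using w b by (simp add: is_min_rep_def)
      then have "0 \<le> coeff c (coroot (w b))"
        using coeff_coroot_nonneg_iff[OF pos_root_in_R] coeff_pos_root_Nats Nats_nonneg by blast
      moreover have "0 \<le> cocoeff b (x - y)" using le b Nats_nonneg by (simp add: root_le_coroots_iff)
      ultimately show ?thesis using coroot_conj[OF oW] by simp
    qed (simp add: cocoeff_diff[OF ai] cocoeff_coroot_class xQ y)
    then have "0 \<le> (\<Sum>b\<in>Sm. cocoeff b (x - y) * coeff c (w (coroot b)))" by (rule sum_nonneg)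
    ultimately show ?thesis by (simp add: wy coeff_diff coeff_sum coeff_scale)
  qed
  moreover have "w y = coroot (w \<beta>y)" using hy(2) coroot_conj[OF oW] by simp
  moreover have "w \<beta>y \<in> R" using W_maps_R[OF wW class_roots_in_R[OF hy(1)]] .
  ultimately have "w \<beta>y \<notin> P"
    using not_pos_if_coeffs_nonpos coeff_coroot_nonpos_iff by metis
  then show ?thesis using mem_ideal_of[OF m] y hy(3) by (simp add: w_def)
qed

lemma ideal_of_in_lower_ideals: "\<mu> \<in> \<Lambda> \<Longrightarrow> ideal_of \<mu> \<in> lower_ideals Q (root_le (coroot ` Sm))"
  unfolding lower_ideals_def using ideal_of_subset ideal_of_lower_closed by blast

lemma is_min_rep_refl_comp:
  assumes w: "is_min_rep w \<mu>" and a: "a \<in> Sm" and e: "w \<epsilon> = a" "\<epsilon> \<notin> J"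
  shows "is_min_rep (refl a \<circ> w) (refl a \<mu>)"
  unfolding is_min_rep_def
proof (intro conjI ballI)
  have wW: "w \<in> W" using w by (simp add: is_min_rep_def)
  show "refl a \<circ> w \<in> W" using comp_in_gen_group[OF refl_in_gen_group[OF a] wW] .
  show "(refl a \<circ> w) \<omega> = refl a \<mu>" using w by (simp add: is_min_rep_def)
  fix b assume b: "b \<in> J"
  then have "w b \<noteq> a" using e inj_W[OF wW] by (metis injD)
  then show "(refl a \<circ> w) b \<in> P" using refl_simple_pos[OF a] w b by (simp add: is_min_rep_def)
qed

lemma raising_step:
  assumes m: "\<mu> \<in> \<Lambda>" and a: "a \<in> Sm" and p: "\<mu> \<bullet> coroot a = -1"
  shows "refl a \<mu> = \<mu> + a" and "refl a \<mu> \<in> \<Lambda>"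
    and "\<exists>\<gamma>\<in>ideal_of \<mu>. ideal_of (refl a \<mu>) = ideal_of \<mu> - {\<gamma>}"
proof -
  define w where "w = min_rep \<mu>"
  have w: "is_min_rep w \<mu>" using is_min_rep_min_rep[OF m] by (simp add: w_def)
  then have wW: "w \<in> W" by (simp add: is_min_rep_def)
  obtain \<epsilon> where e: "\<epsilon> \<in> R" "w \<epsilon> = a" using W_surj_R[OF wW simple_in_R[OF a]] by blast
  have "\<mu> \<bullet> coroot (w \<epsilon>) = \<omega> \<bullet> coroot \<epsilon>"
    using pairing_transfer[OF wW] w by (simp add: is_min_rep_def)
  then have "\<omega> \<bullet> coroot \<epsilon> = -1" using e(2) p by simp
  then have "\<epsilon> \<notin> P" using fund_weight_coroot_eq_iff(2)[OF e(1)] not_pos_if_coeff_neg[OF e(1)] by simp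
  then have "\<epsilon> \<notin> J" using simple_pos by blast
  have inv: "inversions (refl a \<circ> w) = inversions w - {- \<epsilon>}"
    using inversions_refl_comp[OF wW a e] \<open>\<epsilon> \<notin> P\<close> by simp
  have "- \<epsilon> \<in> inversions w"
    using \<open>\<epsilon> \<notin> P\<close> not_pos_iff[OF e(1)] e(2) W_uminus[OF wW] uminus_not_pos[OF simple_pos[OF a]]
    by (simp add: inversions_def)
  then have "coroot (- \<epsilon>) \<in> ideal_of \<mu>" by (simp add: ideal_of_def w_def)
  moreover have "coroot ` (inversions w - {- \<epsilon>}) = coroot ` inversions w - coroot ` {- \<epsilon>}"
    using \<open>- \<epsilon> \<in> inversions w\<close>
    by (intro inj_on_image_set_diff[OF inj_on_coroot[OF zero_notin_R]]) (auto simp: inversions_def pos_root_in_R)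
  then have "ideal_of (refl a \<mu>) = ideal_of \<mu> - {coroot (- \<epsilon>)}"
    using min_rep_eqI[OF is_min_rep_refl_comp[OF w a e(2) \<open>\<epsilon> \<notin> J\<close>]] inv
    by (simp add: ideal_of_def w_def)
  ultimately show "\<exists>\<gamma>\<in>ideal_of \<mu>. ideal_of (refl a \<mu>) = ideal_of \<mu> - {\<gamma>}" by blast
  show "refl a \<mu> = \<mu> + a" using p by (simp add: refl_eq_coroot_pairing)
  show "refl a \<mu> \<in> \<Lambda>" using weights_W_closed[OF m refl_in_gen_group[OF a]] .
qed

lemma lowering_step_if_simple:
  assumes m: "\<mu> \<in> \<Lambda>" and g: "\<gamma> \<in> Q" and a: "min_rep \<mu> (coroot \<gamma>) \<in> Sm"
  defines "a' \<equiv> min_rep \<mu> (coroot \<gamma>)"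
  shows "refl a' \<mu> = \<mu> - a'" and "refl a' \<mu> \<in> \<Lambda>" and "ideal_of (refl a' \<mu>) = insert \<gamma> (ideal_of \<mu>)"
proof -
  define w where "w = min_rep \<mu>"
  have w: "is_min_rep w \<mu>" using is_min_rep_min_rep[OF m] by (simp add: w_def)
  then have wW: "w \<in> W" by (simp add: is_min_rep_def)
  obtain \<beta> where b: "\<beta> \<in> class_roots" "\<gamma> = coroot \<beta>" "coroot \<gamma> = \<beta>" using coroot_classE[OF g] .
  have a': "a' \<in> Sm" "w \<beta> = a'" using a b(3) by (simp_all add: a'_def w_def)
  have "\<beta> \<in> P" "\<beta> \<notin> J" using b(1) coeff_simple by (auto simp: class_roots_def split: if_splits)
  have "\<mu> \<bullet> coroot a' = 1"
    using pairing_transfer[OF wW] w a'(2) fund_weight_coroot_eq_iff(1) class_roots_in_R[OF b(1)] b(1)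
    by (auto simp: is_min_rep_def class_roots_def)
  then show "refl a' \<mu> = \<mu> - a'" by (simp add: refl_eq_coroot_pairing)
  show "refl a' \<mu> \<in> \<Lambda>" using weights_W_closed[OF m refl_in_gen_group[OF a'(1)]] .
  have "inversions (refl a' \<circ> w) = insert \<beta> (inversions w)"
    using inversions_refl_comp[OF wW a'(1) class_roots_in_R[OF b(1)] a'(2)] \<open>\<beta> \<in> P\<close> by simp
  then show "ideal_of (refl a' \<mu>) = insert \<gamma> (ideal_of \<mu>)"
    using min_rep_eqI[OF is_min_rep_refl_comp[OF w a'(1) a'(2) \<open>\<beta> \<notin> J\<close>]] b(2)
    by (simp add: ideal_of_def w_def)
qed

end

locale minimal_missing_coroot = minuscule_weight +
  fixes \<mu> \<gamma> :: 'a
  assumes weight: "\<mu> \<in> \<Lambda>" and in_class: "\<gamma> \<in> Q" and missing: "\<gamma> \<notin> ideal_of \<mu>"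
    and minimal: "\<And>\<gamma>'. \<gamma>' \<in> Q \<Longrightarrow> root_le (coroot ` Sm) \<gamma>' \<gamma> \<Longrightarrow> \<gamma>' \<noteq> \<gamma> \<Longrightarrow> \<gamma>' \<in> ideal_of \<mu>"
begin

lemma min_rep_W: "min_rep \<mu> \<in> W"
  using is_min_rep_min_rep[OF weight] by (simp add: is_min_rep_def)

lemma fund_weight_inner_gamma: "\<omega> \<bullet> \<gamma> = 1"
  using cocoeff_coroot_class[OF in_class] by (simp add: fund_weight_inner)

lemma coroot_not_below:
  assumes e: "\<epsilon> \<in> class_roots" "min_rep \<mu> \<epsilon> \<in> P" "coroot \<epsilon> \<noteq> \<gamma>"
    and x: "x \<in> insert \<gamma> (ideal_of \<mu>)"
  shows "\<not> root_le (coroot ` Sm) (coroot \<epsilon>) x"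
proof
  assume le: "root_le (coroot ` Sm) (coroot \<epsilon>) x"
  have eQ: "coroot \<epsilon> \<in> Q" using e(1) coroot_class_eq by blast
  have "coroot \<epsilon> \<in> ideal_of \<mu>"
  proof (cases "x = \<gamma>")
    case True
    then show ?thesis using minimal[OF eQ] le e(3) by simp
  next
    case False
    then show ?thesis using x ideal_of_lower_closed[OF weight _ eQ le] by simp
  qed
  then have "min_rep \<mu> (coroot (coroot \<epsilon>)) \<notin> P" using mem_ideal_of[OF weight] by blast
  then show False using e(2) coroot_coroot[OF root_nonzero[OF class_roots_in_R[OF e(1)]]] by simp
qed

text \<open>If the minimal representative w sends \<gamma>^\<or> to a non-simple positive root \<delta>, pick a simple
  root \<alpha> with \<alpha> \<bullet> \<delta> > 0 and the root \<epsilon> with w \<epsilon> = \<alpha>; then \<rho> = s_\<epsilon> (\<gamma>^\<or>) has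
  w \<rho> = s_\<alpha> \<delta> > 0 and \<rho>^\<or> = \<gamma> - m \<epsilon>^\<or> with m = \<gamma> \<bullet> \<epsilon>.\<close>

lemma descent_data:
  assumes "min_rep \<mu> (coroot \<gamma>) \<notin> Sm"
  obtains \<epsilon> \<rho> m where "\<epsilon> \<in> R" "min_rep \<mu> \<epsilon> \<in> Sm" "coroot \<epsilon> \<noteq> \<gamma>" "\<rho> \<in> R" "min_rep \<mu> \<rho> \<in> P"
    "coroot \<rho> = \<gamma> - m *\<^sub>R coroot \<epsilon>" "m = \<gamma> \<bullet> \<epsilon>" "m \<in> \<int>" "m \<ge> 1"
proof -
  define w where "w = min_rep \<mu>"
  have wW: "w \<in> W" using min_rep_W by (simp add: w_def)
  have oW: "orthogonal_transformation w" using orthogonal_transformation_W[OF wW] .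
  obtain \<beta> where b: "\<beta> \<in> class_roots" "\<gamma> = coroot \<beta>" "coroot \<gamma> = \<beta>" using coroot_classE[OF in_class] .
  have bR: "\<beta> \<in> R" using class_roots_in_R[OF b(1)] .
  have dP: "w \<beta> \<in> P" using missing mem_ideal_of[OF weight] in_class b(3) by (simp add: w_def)
  have dS: "w \<beta> \<notin> Sm" using assms b(3) by (simp add: w_def)
  obtain \<alpha> where al: "\<alpha> \<in> Sm" "\<alpha> \<bullet> w \<beta> > 0" using simple_inner_pos_exists[OF dP] by blast
  obtain \<epsilon> where e: "\<epsilon> \<in> R" "w \<epsilon> = \<alpha>" using W_surj_R[OF wW simple_in_R[OF al(1)]] by blast
  define m where "m = \<gamma> \<bullet> \<epsilon>"
  have m_eq: "m = 2 * (\<epsilon> \<bullet> \<beta>) / (\<beta> \<bullet> \<beta>)" by (simp add: m_def b(2) inner_commute inner_coroot)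
  have "\<beta> \<bullet> \<epsilon> = w \<beta> \<bullet> w \<epsilon>" using oW by (simp add: orthogonal_transformation_def)
  then have "\<epsilon> \<bullet> \<beta> > 0" using al e(2) by (simp add: inner_commute)
  then have "m > 0" using inner_self_root_pos[OF bR] m_eq by simp
  moreover have "m \<in> \<int>" using pairing_Ints[OF bR e(1)] m_eq by simp
  ultimately have "m \<ge> 1" using Ints_pos_ge_1 by blast
  define \<rho> where "\<rho> = refl \<epsilon> \<beta>"
  have "w \<rho> = refl (w \<epsilon>) (w \<beta>)" using refl_conj[OF oW] by (simp add: \<rho>_def)
  then have "w \<rho> = refl \<alpha> (w \<beta>)" using e(2) by simp
  then have "w \<rho> \<in> P" using refl_simple_pos[OF al(1) dP] dS al(1) by auto
  have "coroot \<rho> = refl \<epsilon> (coroot \<beta>)" using coroot_conj[OF orthogonal_transformation_refl] by (simp add: \<rho>_def)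
  then have "coroot \<rho> = \<gamma> - m *\<^sub>R coroot \<epsilon>" by (simp add: refl_eq_pairing_coroot b(2) m_def)
  moreover have "coroot \<epsilon> \<noteq> \<gamma>"
    using b(2) dS al(1) e inj_on_coroot[OF zero_notin_R] bR by (metis inj_on_eq_iff)
  ultimately show thesis
    using that e \<open>w \<rho> \<in> P\<close> refl_in_R[OF e(1) bR] \<open>m \<in> \<int>\<close> \<open>m \<ge> 1\<close> al(1)
    by (simp add: w_def \<rho>_def m_def)
qed

lemma descent_pairing: "coroot \<rho> = \<gamma> - m *\<^sub>R coroot \<epsilon> \<Longrightarrow> \<omega> \<bullet> coroot \<rho> = 1 - m * (\<omega> \<bullet> coroot \<epsilon>)"
  using fund_weight_inner_gamma by (simp add: inner_diff_right)

lemma descent_coeff_neg_impossible: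
  assumes "\<epsilon> \<in> R" "\<rho> \<in> R" "coroot \<rho> = \<gamma> - m *\<^sub>R coroot \<epsilon>" "m \<ge> 1" "coeff ai \<epsilon> < 0"
  shows False
proof -
  have "\<omega> \<bullet> coroot \<rho> = 1 + m"
    using descent_pairing[OF assms(3)] fund_weight_coroot_eq_iff(2)[OF assms(1)] assms(5) by simp
  then show False using fund_weight_coroot_range[OF assms(2)] assms(4) by auto
qed

lemma descent_coeff_zero_impossible:
  assumes e: "\<epsilon> \<in> R" "min_rep \<mu> \<epsilon> \<in> Sm" and r: "\<rho> \<in> R" "min_rep \<mu> \<rho> \<in> P"
    and cr: "coroot \<rho> = \<gamma> - m *\<^sub>R coroot \<epsilon>" and m: "m \<in> \<int>" "m \<ge> 1" and c: "coeff ai \<epsilon> = 0"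
  shows False
proof (cases "\<epsilon> \<in> P")
  case False
  then show False
    using is_min_rep_not_pos[OF is_min_rep_min_rep[OF weight] e(1) _ c] e(2) simple_pos by blast
next
  case True
  have "\<omega> \<bullet> coroot \<rho> = 1"
    using descent_pairing[OF cr] fund_weight_coroot_eq_iff(3)[OF e(1)] c by simp
  then have "\<rho> \<in> class_roots"
    using fund_weight_coroot_eq_iff(1)[OF r(1)] pos_if_coeff_pos[OF r(1)] by (simp add: class_roots_def)
  then have "coroot \<rho> \<in> Q" using coroot_class_eq by blast
  moreover have "\<gamma> - coroot \<rho> = m *\<^sub>R coroot \<epsilon>" using cr by simp
  then have "root_le (coroot ` Sm) (coroot \<rho>) \<gamma>"
    using pos_coroot_cocoeff_Nats[OF True] m by (simp add: root_le_coroots_iff cocoeff_scale Nats_altdef2)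
  moreover have "coroot \<rho> \<noteq> \<gamma>" using cr m(2) root_nonzero[OF e(1)] by (simp add: coroot_eq_0_iff)
  ultimately have "coroot \<rho> \<in> ideal_of \<mu>" by (rule minimal)
  then show False
    using mem_ideal_of[OF weight] r(2) coroot_coroot[OF root_nonzero[OF r(1)]] by simp
qed

lemma descent_pairing_1_impossible:
  assumes e: "\<epsilon> \<in> class_roots" "min_rep \<mu> \<epsilon> \<in> P" "coroot \<epsilon> \<noteq> \<gamma>"
    and r: "\<rho> \<in> R" "min_rep \<mu> \<rho> \<in> P" and cr: "coroot \<rho> = \<gamma> - coroot \<epsilon>"
  shows False
proof (cases "\<rho> \<in> P")
  case True
  then have "root_le (coroot ` Sm) (coroot \<epsilon>) \<gamma>" by (rule root_le_coroots_if_diff_pos_coroot[OF _ cr[symmetric]])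
  then show False using coroot_not_below[OF e] by blast
next
  case False
  have "\<omega> \<bullet> coroot \<rho> = 0"
    using descent_pairing[of \<rho> 1 \<epsilon>] cr fund_weight_coroot_eq_iff(1) class_roots_in_R[OF e(1)] e(1)
    by (simp add: class_roots_def)
  then have "min_rep \<mu> \<rho> \<notin> P"
    using is_min_rep_not_pos[OF is_min_rep_min_rep[OF weight] r(1) False] fund_weight_coroot_eq_iff(3)[OF r(1)]
    by simp
  then show False using r(2) by simp
qed

text \<open>When \<gamma> \<bullet> \<epsilon> = 2, the root \<epsilon> is longer than \<beta> = \<gamma>^\<or>, and s_\<beta> \<epsilon> has coroot \<epsilon>^\<or> - \<gamma>;
  either sign of this root puts \<epsilon>^\<or> below \<gamma> or below an element of the ideal.\<close>

lemma descent_pairing_2_impossible: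
  assumes e: "\<epsilon> \<in> class_roots" "min_rep \<mu> \<epsilon> \<in> P" "coroot \<epsilon> \<noteq> \<gamma>"
    and r: "\<rho> \<in> R" "min_rep \<mu> \<rho> \<in> P" and cr: "coroot \<rho> = \<gamma> - 2 *\<^sub>R coroot \<epsilon>"
    and m: "\<gamma> \<bullet> \<epsilon> = 2"
  shows False
proof -
  obtain \<beta> where b: "\<beta> \<in> class_roots" "\<gamma> = coroot \<beta>" "coroot \<gamma> = \<beta>" using coroot_classE[OF in_class] .
  have bR: "\<beta> \<in> R" and eR: "\<epsilon> \<in> R" using class_roots_in_R b(1) e(1) by auto
  have "\<beta> \<noteq> \<epsilon>" using e(3) b(2) by auto
  have "\<epsilon> \<bullet> coroot \<beta> = 2" using m by (simp add: b(2) inner_commute)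
  then have "2 * (\<epsilon> \<bullet> \<beta>) / (\<beta> \<bullet> \<beta>) = 2" by (simp only: inner_coroot)
  then have k: "\<beta> \<bullet> coroot \<epsilon> = 1" using dual_pairing_eq_1[OF bR eR \<open>\<beta> \<noteq> \<epsilon>\<close>] by blast
  define \<rho>' where "\<rho>' = refl \<beta> \<epsilon>"
  have r'R: "\<rho>' \<in> R" using refl_in_R[OF bR eR] by (simp add: \<rho>'_def)
  have "coroot \<rho>' = refl \<beta> (coroot \<epsilon>)"
    using coroot_conj[OF orthogonal_transformation_refl] by (simp add: \<rho>'_def)
  then have cr': "coroot \<rho>' = coroot \<epsilon> - \<gamma>" using k b(2) by (simp add: refl_eq_pairing_coroot inner_commute)
  show False
  proof (cases "\<rho>' \<in> P")
    case False
    then have "- \<rho>' \<in> P" using not_pos_iff[OF r'R] by blast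
    moreover have "\<gamma> - coroot \<epsilon> = coroot (- \<rho>')" using cr' by (simp add: coroot_uminus)
    ultimately have "root_le (coroot ` Sm) (coroot \<epsilon>) \<gamma>" by (rule root_le_coroots_if_diff_pos_coroot)
    then show False using coroot_not_below[OF e] by blast
  next
    case True
    define \<eta> where "\<eta> = coroot (- \<rho>)"
    have "\<omega> \<bullet> coroot (- \<rho>) = 1"
      using descent_pairing[OF cr] fund_weight_coroot_eq_iff(1) eR e(1)
      by (simp add: class_roots_def coroot_uminus)
    then have "- \<rho> \<in> class_roots"
      using fund_weight_coroot_eq_iff(1)[OF uminus_in_R[OF r(1)]] pos_if_coeff_pos uminus_in_R[OF r(1)]
      by (simp add: class_roots_def)
    then have "\<eta> \<in> Q" using coroot_class_eq by (auto simp: \<eta>_def)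
    moreover have "min_rep \<mu> (- \<rho>) \<notin> P" using r(2) W_uminus[OF min_rep_W] uminus_not_pos by simp
    ultimately have "\<eta> \<in> ideal_of \<mu>"
      using mem_ideal_of[OF weight] coroot_coroot[OF root_nonzero[OF uminus_in_R[OF r(1)]]] by (simp add: \<eta>_def)
    moreover have "\<eta> - coroot \<epsilon> = coroot \<rho>'" using cr cr' by (simp add: \<eta>_def coroot_uminus scaleR_2)
    then have "root_le (coroot ` Sm) (coroot \<epsilon>) \<eta>" using True by (intro root_le_coroots_if_diff_pos_coroot)
    ultimately show False using coroot_not_below[OF e] by blast
  qed
qed

lemma descent_coeff_pos_impossible:
  assumes e: "\<epsilon> \<in> R" "min_rep \<mu> \<epsilon> \<in> Sm" "coroot \<epsilon> \<noteq> \<gamma>"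
    and r: "\<rho> \<in> R" "min_rep \<mu> \<rho> \<in> P" and cr: "coroot \<rho> = \<gamma> - m *\<^sub>R coroot \<epsilon>"
    and m: "m = \<gamma> \<bullet> \<epsilon>" "m \<in> \<int>" "m \<ge> 1" and c: "coeff ai \<epsilon> > 0"
  shows False
proof -
  have eC: "\<epsilon> \<in> class_roots" using pos_if_coeff_pos[OF e(1) c] c by (simp add: class_roots_def)
  have "\<omega> \<bullet> coroot \<rho> = 1 - m"
    using descent_pairing[OF cr] fund_weight_coroot_eq_iff(1)[OF e(1)] c by simp
  then have "m \<le> 2" using fund_weight_coroot_range[OF r(1)] by auto
  then consider "m = 1" | "m = 2" using Ints_between_1_2 m(2,3) by blast
  then show False
  proof cases
    case 1
    then show False
      using descent_pairing_1_impossible[OF eC _ e(3) r] e(2) simple_pos cr by simp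
  next
    case 2
    then show False
      using descent_pairing_2_impossible[OF eC _ e(3) r] e(2) simple_pos cr m(1) by simp
  qed
qed

lemma min_rep_coroot_simple: "min_rep \<mu> (coroot \<gamma>) \<in> Sm"
proof (rule ccontr)
  assume "min_rep \<mu> (coroot \<gamma>) \<notin> Sm"
  then obtain \<epsilon> \<rho> m where d: "\<epsilon> \<in> R" "min_rep \<mu> \<epsilon> \<in> Sm" "coroot \<epsilon> \<noteq> \<gamma>" "\<rho> \<in> R"
    "min_rep \<mu> \<rho> \<in> P" "coroot \<rho> = \<gamma> - m *\<^sub>R coroot \<epsilon>" "m = \<gamma> \<bullet> \<epsilon>" "m \<in> \<int>" "m \<ge> 1"
    by (rule descent_data)
  consider "coeff ai \<epsilon> < 0" | "coeff ai \<epsilon> = 0" | "coeff ai \<epsilon> > 0" by linarith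
  then show False
  proof cases
    case 1
    then show False using descent_coeff_neg_impossible d(1,4,6,9) by blast
  next
    case 2
    then show False using descent_coeff_zero_impossible d(1,2,4,5,6,8,9) by blast
  next
    case 3
    then show False using descent_coeff_pos_impossible d by blast
  qed
qed

end

context minuscule_weight
begin

lemma lowering_step:
  assumes "\<mu> \<in> \<Lambda>" "\<gamma> \<in> Q" "\<gamma> \<notin> ideal_of \<mu>"
    and "\<And>\<gamma>'. \<gamma>' \<in> Q \<Longrightarrow> root_le (coroot ` Sm) \<gamma>' \<gamma> \<Longrightarrow> \<gamma>' \<noteq> \<gamma> \<Longrightarrow> \<gamma>' \<in> ideal_of \<mu>"
  shows "\<exists>a\<in>Sm. refl a \<mu> = \<mu> - a \<and> refl a \<mu> \<in> \<Lambda> \<and> ideal_of (refl a \<mu>) = insert \<gamma> (ideal_of \<mu>)"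
proof -
  interpret minimal_missing_coroot R Sm ai \<mu> \<gamma>
    by unfold_locales (use assms in auto)
  show ?thesis
    using lowering_step_if_simple[OF assms(1,2) min_rep_coroot_simple] min_rep_coroot_simple by blast
qed

section \<open>The ideal map is an anti-isomorphism onto the lower ideals\<close>

lemma weight_coroot_range:
  assumes "\<mu> \<in> \<Lambda>" "\<beta> \<in> R" shows "\<mu> \<bullet> coroot \<beta> \<in> {-1, 0, 1}"
proof -
  obtain w where w: "w \<in> W" "w \<omega> = \<mu>" using weights_orbit[OF assms(1)] by blast
  obtain \<epsilon> where "\<epsilon> \<in> R" "w \<epsilon> = \<beta>" using W_surj_R[OF w(1) assms(2)] by blast
  then show ?thesis using pairing_transfer[OF w] fund_weight_coroot_range by metis
qed

lemma ideal_of_inject: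
  assumes "\<mu> \<in> \<Lambda>" "\<nu> \<in> \<Lambda>" "ideal_of \<mu> = ideal_of \<nu>" shows "\<mu> = \<nu>"
proof -
  have "inversions (min_rep \<mu>) \<subseteq> R" "inversions (min_rep \<nu>) \<subseteq> R"
    by (auto simp: inversions_def pos_root_in_R)
  then have "inversions (min_rep \<mu>) = inversions (min_rep \<nu>)"
    using assms(3) inj_on_image_eq_iff[OF inj_on_coroot[OF zero_notin_R]] by (simp add: ideal_of_def)
  then have "min_rep \<mu> = min_rep \<nu>"
    using inversions_inject is_min_rep_min_rep assms(1,2) by (simp add: is_min_rep_def)
  then show ?thesis using is_min_rep_min_rep assms(1,2) by (metis is_min_rep_def)
qed

text \<open>Two distinct weights of the same length: the difference d = \<nu> - \<mu> satisfies \<mu> \<bullet> d < 0,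
  so some simple root in the support of d pairs negatively with \<mu>.\<close>

lemma raising_simple_exists:
  assumes m: "\<mu> \<in> \<Lambda>" and n: "\<nu> \<in> \<Lambda>" and le: "root_le Sm \<mu> \<nu>" and ne: "\<mu> \<noteq> \<nu>"
  shows "\<exists>b\<in>Sm. \<mu> \<bullet> coroot b = -1 \<and> root_le Sm (\<mu> + b) \<nu>"
proof -
  define d where "d = \<nu> - \<mu>"
  have "(\<mu> + d) \<bullet> (\<mu> + d) = \<mu> \<bullet> \<mu>" using weights_norm[OF m] weights_norm[OF n] by (simp add: d_def)
  then have "2 * (\<mu> \<bullet> d) + d \<bullet> d = 0" by (simp add: inner_add_left inner_add_right inner_commute)
  moreover have "d \<bullet> d > 0" using ne by (simp add: d_def)
  ultimately have "\<mu> \<bullet> d < 0" by linarith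
  then have "\<mu> \<bullet> (\<Sum>b\<in>Sm. coeff b d *\<^sub>R b) < 0" by (simp add: sum_coeff)
  then have "(\<Sum>b\<in>Sm. coeff b d * (\<mu> \<bullet> b)) < 0" by (simp add: inner_sum_right)
  then obtain b where b: "b \<in> Sm" "coeff b d * (\<mu> \<bullet> b) < 0"
    using sum_nonneg[of Sm "\<lambda>b. coeff b d * (\<mu> \<bullet> b)"] by (auto simp: not_le[symmetric])
  have cb: "coeff b d \<in> \<nat>" using le b(1) by (simp add: root_le_iff d_def)
  then have "coeff b d \<ge> 0" using Nats_nonneg by blast
  then have "coeff b d > 0" "\<mu> \<bullet> b < 0" using b(2) by (auto simp: mult_less_0_iff)
  then have "\<mu> \<bullet> coroot b < 0" using inner_self_root_pos[OF simple_in_R[OF b(1)]]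
    by (simp add: inner_coroot divide_neg_pos)
  then have "\<mu> \<bullet> coroot b = -1" using weight_coroot_range[OF m simple_in_R[OF b(1)]] by auto
  moreover have "coeff b d \<ge> 1" using \<open>coeff b d > 0\<close> cb Ints_pos_ge_1 Nats_subset_Ints by blast
  have "root_le Sm (\<mu> + b) \<nu>"
    unfolding root_le_iff
  proof
    fix c assume c: "c \<in> Sm"
    have "coeff c (\<nu> - (\<mu> + b)) = coeff c d - (if c = b then 1 else 0)"
      by (simp add: d_def coeff_diff coeff_add coeff_simple[OF b(1)])
    moreover have "coeff c d \<in> \<nat>" using le c by (simp add: root_le_iff d_def)
    ultimately show "coeff c (\<nu> - (\<mu> + b)) \<in> \<nat>"
      using \<open>coeff b d \<ge> 1\<close> by (cases "c = b") (auto simp: Nats_altdef2)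
  qed
  ultimately show ?thesis using b(1) by blast
qed

lemma ideal_of_antimono:
  assumes "\<mu> \<in> \<Lambda>" "\<nu> \<in> \<Lambda>" "root_le Sm \<mu> \<nu>" shows "ideal_of \<nu> \<subseteq> ideal_of \<mu>"
  using assms
proof (induction "card (ideal_of \<mu>)" arbitrary: \<mu> rule: less_induct)
  case less
  show ?case
  proof (cases "\<mu> = \<nu>")
    case False
    then obtain b where b: "b \<in> Sm" "\<mu> \<bullet> coroot b = -1" "root_le Sm (\<mu> + b) \<nu>"
      using raising_simple_exists less.prems by blast
    note step = raising_step[OF less.prems(1) b(1,2)]
    obtain \<gamma> where g: "\<gamma> \<in> ideal_of \<mu>" "ideal_of (refl b \<mu>) = ideal_of \<mu> - {\<gamma>}" using step(3) by blast
    have "card (ideal_of (refl b \<mu>)) < card (ideal_of \<mu>)"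
      unfolding g(2) by (rule card_Diff1_less[OF finite_ideal_of[OF less.prems(1)] g(1)])
    then have "ideal_of \<nu> \<subseteq> ideal_of (refl b \<mu>)" using less.hyps step(1,2) less.prems(2) b(3) by simp
    then show ?thesis using g by auto
  qed simp
qed

lemma ideal_of_reflects:
  assumes "\<mu> \<in> \<Lambda>" "\<nu> \<in> \<Lambda>" "ideal_of \<nu> \<subseteq> ideal_of \<mu>" shows "root_le Sm \<mu> \<nu>"
  using assms
proof (induction "card (ideal_of \<mu> - ideal_of \<nu>)" arbitrary: \<nu> rule: less_induct)
  case less
  let ?D = "ideal_of \<mu> - ideal_of \<nu>"
  show ?case
  proof (cases "?D = {}")
    case True
    then show ?thesis using ideal_of_inject less.prems root_le_refl by blast
  next
    case False
    have finD: "finite ?D" using finite_ideal_of[OF less.prems(1)] by simp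
    define \<gamma> where "\<gamma> = arg_min_on coheight ?D"
    have g: "\<gamma> \<in> ?D" using arg_min_if_finite(1)[OF finD False] by (simp add: \<gamma>_def)
    have gmin: "coheight \<gamma> \<le> coheight y" if "y \<in> ?D" for y
      using arg_min_least[OF finD False that] by (simp add: \<gamma>_def)
    have gQ: "\<gamma> \<in> Q" using g ideal_of_subset[OF less.prems(1)] by auto
    have "\<gamma>' \<in> ideal_of \<nu>" if "\<gamma>' \<in> Q" "root_le (coroot ` Sm) \<gamma>' \<gamma>" "\<gamma>' \<noteq> \<gamma>" for \<gamma>'
    proof (rule ccontr)
      assume "\<gamma>' \<notin> ideal_of \<nu>"
      moreover have "\<gamma>' \<in> ideal_of \<mu>" using ideal_of_lower_closed[OF less.prems(1) _ that(1,2)] g by blast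
      ultimately have "coheight \<gamma> \<le> coheight \<gamma>'" using gmin by blast
      then show False using coheight_less[OF that(2,3)] by simp
    qed
    then obtain a where a: "a \<in> Sm" "refl a \<nu> = \<nu> - a" "refl a \<nu> \<in> \<Lambda>"
      "ideal_of (refl a \<nu>) = insert \<gamma> (ideal_of \<nu>)"
      using lowering_step[OF less.prems(2) gQ] g by blast
    have "ideal_of \<mu> - ideal_of (refl a \<nu>) = ?D - {\<gamma>}" using a(4) by auto
    then have "card (ideal_of \<mu> - ideal_of (refl a \<nu>)) < card ?D"
      using card_Diff1_less[OF finD g] by simp
    moreover have "ideal_of (refl a \<nu>) \<subseteq> ideal_of \<mu>" using a(4) g less.prems(3) by auto
    ultimately have "root_le Sm \<mu> (\<nu> - a)" using less.hyps less.prems(1) a(2,3) by metis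
    moreover have "root_le Sm (\<nu> - a) \<nu>" using a(1) by (simp add: root_le_iff coeff_simple)
    ultimately show ?thesis by (rule root_le_trans)
  qed
qed

lemma ideal_of_fund_weight: "ideal_of \<omega> = {}"
proof -
  have "is_min_rep id \<omega>" using id_in_gen_group simple_pos by (auto simp: is_min_rep_def)
  then show ?thesis using min_rep_eqI by (simp add: ideal_of_def inversions_def)
qed

lemma ideal_of_surj:
  "I \<in> lower_ideals Q (root_le (coroot ` Sm)) \<Longrightarrow> \<exists>\<mu>\<in>\<Lambda>. ideal_of \<mu> = I"
proof (induction "card I" arbitrary: I rule: less_induct)
  case less
  have IQ: "I \<subseteq> Q" and lower: "\<And>x y. x \<in> I \<Longrightarrow> y \<in> Q \<Longrightarrow> root_le (coroot ` Sm) y x \<Longrightarrow> y \<in> I"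
    using less.prems by (auto simp: lower_ideals_def)
  have finI: "finite I" using finite_subset[OF IQ finite_coroot_class] .
  show ?case
  proof (cases "I = {}")
    case True
    then show ?thesis using ideal_of_fund_weight fund_weight_in_weights by blast
  next
    case False
    define \<gamma> where "\<gamma> = arg_min_on (\<lambda>x. - coheight x) I"
    have g: "\<gamma> \<in> I" using arg_min_if_finite(1)[OF finI False] by (simp add: \<gamma>_def)
    have gmax: "coheight y \<le> coheight \<gamma>" if "y \<in> I" for y
      using arg_min_least[OF finI False that, of "\<lambda>x. - coheight x"] by (simp add: \<gamma>_def)
    have "I - {\<gamma>} \<in> lower_ideals Q (root_le (coroot ` Sm))"
      using lower_ideals_Diff_max[OF less.prems g, of coheight] gmax coheight_less by blast
    moreover have "card (I - {\<gamma>}) < card I" by (rule card_Diff1_less[OF finI g])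
    ultimately obtain \<mu> where m: "\<mu> \<in> \<Lambda>" "ideal_of \<mu> = I - {\<gamma>}" using less.hyps by metis
    have below: "\<gamma>' \<in> ideal_of \<mu>" if "\<gamma>' \<in> Q" "root_le (coroot ` Sm) \<gamma>' \<gamma>" "\<gamma>' \<noteq> \<gamma>" for \<gamma>'
      using lower[OF g that(1,2)] that(3) m(2) by simp
    have "\<gamma> \<in> Q" "\<gamma> \<notin> ideal_of \<mu>" using g IQ m(2) by auto
    then obtain a where "refl a \<mu> \<in> \<Lambda>" "ideal_of (refl a \<mu>) = insert \<gamma> (ideal_of \<mu>)"
      using lowering_step[OF m(1) _ _ below] by blast
    moreover have "insert \<gamma> (ideal_of \<mu>) = I" using m(2) g by auto
    ultimately show ?thesis by auto
  qed
qed

section \<open>The longest elements w_0 and w_0^i\<close>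

lemma w0_props: "w0 R Sm \<in> W" "inversions (w0 R Sm) = P" "w0 R Sm (w0 R Sm x) = x"
  using longest_elt_gen_group[OF order_refl] longest_elt_involution[OF order_refl]
  by (simp_all add: w0_def weyl_eq_W pos_roots_on_simple)

lemma w0_pos_iff: assumes "x \<in> R" shows "w0 R Sm x \<in> P \<longleftrightarrow> x \<notin> P"
proof (cases "x \<in> P")
  case False
  then have "w0 R Sm (- x) \<notin> P" using w0_props(2) not_pos_iff[OF assms] by (auto simp: inversions_def)
  then show ?thesis
    using False not_pos_iff[OF W_maps_R[OF w0_props(1) assms]] by (simp add: W_uminus[OF w0_props(1)])
qed (use w0_props(2) in \<open>auto simp: inversions_def\<close>)

lemma w0_reverses_root_le:
  assumes "root_le Sm x y" shows "root_le Sm (w0 R Sm y) (w0 R Sm x)"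
  unfolding root_le_iff
proof
  fix b assume b: "b \<in> Sm"
  have lin: "linear (w0 R Sm)" using linear_W[OF w0_props(1)] .
  have "w0 R Sm x - w0 R Sm y = w0 R Sm (- (y - x))" by (simp add: linear_neg[OF lin] linear_diff[OF lin])
  also have "- (y - x) = (\<Sum>c\<in>Sm. coeff c (y - x) *\<^sub>R (- c))"
    using sum_coeff[of "y - x"] by (simp add: sum_negf)
  also have "w0 R Sm \<dots> = (\<Sum>c\<in>Sm. coeff c (y - x) *\<^sub>R (- w0 R Sm c))"
    by (simp add: linear_sum[OF lin] linear_scale[OF lin] linear_neg[OF lin])
  finally have "coeff b (w0 R Sm x - w0 R Sm y) = (\<Sum>c\<in>Sm. coeff c (y - x) * coeff b (- w0 R Sm c))"
    by (simp add: coeff_sum coeff_scale coeff_uminus)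
  moreover have t: "coeff c (y - x) * coeff b (- w0 R Sm c) \<in> \<nat>" if c: "c \<in> Sm" for c
  proof -
    have "- w0 R Sm c \<in> P"
      using w0_pos_iff not_pos_iff W_maps_R[OF w0_props(1)] simple_in_R[OF c] simple_pos[OF c] by blast
    then show ?thesis using coeff_pos_root_Nats assms c by (simp add: root_le_iff Nats_mult)
  qed
  moreover have "(\<Sum>c\<in>Sm. coeff c (y - x) * coeff b (- w0 R Sm c)) \<in> \<int>"
    using t Nats_subset_Ints by (intro Ints_sum) blast
  moreover have "(\<Sum>c\<in>Sm. coeff c (y - x) * coeff b (- w0 R Sm c)) \<ge> 0"
    using t Nats_nonneg by (intro sum_nonneg) blast
  ultimately show "coeff b (w0 R Sm x - w0 R Sm y) \<in> \<nat>" by (simp add: Nats_altdef2)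
qed

lemma w0i_props: "w0i Sm ai \<in> gen_group J" "inversions (w0i Sm ai) = pos_roots_on J"
  "w0i Sm ai (w0i Sm ai x) = x"
  using longest_elt_gen_group[of J] longest_elt_involution[of J] by (auto simp: w0i_def)

lemma w0i_in_W: "w0i Sm ai \<in> W"
  using w0i_props(1) gen_group_subset_W[of J] by blast

lemma coeff_ai_w0i: "coeff ai (w0i Sm ai x) = coeff ai x"
  using coeff_gen_group_invariant[OF _ w0i_props(1)] ai by simp

lemma w0i_coroot_class: assumes "\<gamma> \<in> Q" shows "w0i Sm ai \<gamma> \<in> Q"
proof -
  obtain \<beta> where b: "\<beta> \<in> class_roots" "\<gamma> = coroot \<beta>" using coroot_classE[OF assms] by metis
  have "w0i Sm ai \<gamma> = coroot (w0i Sm ai \<beta>)"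
    using coroot_conj[OF orthogonal_transformation_W[OF w0i_in_W]] b(2) by simp
  moreover have "coeff ai (w0i Sm ai \<beta>) > 0" using b(1) coeff_ai_w0i by (simp add: class_roots_def)
  then have "w0i Sm ai \<beta> \<in> class_roots"
    using pos_if_coeff_pos[OF W_maps_R[OF w0i_in_W class_roots_in_R[OF b(1)]]] by (simp add: class_roots_def)
  ultimately show ?thesis using coroot_class_eq by simp
qed

lemma is_min_rep_w0:
  assumes m: "\<mu> \<in> \<Lambda>"
  shows "is_min_rep (w0 R Sm \<circ> min_rep \<mu> \<circ> w0i Sm ai) (w0 R Sm \<mu>)"
  unfolding is_min_rep_def
proof (intro conjI ballI)
  have w: "is_min_rep (min_rep \<mu>) \<mu>" using is_min_rep_min_rep[OF m] .
  then have wW: "min_rep \<mu> \<in> W" by (simp add: is_min_rep_def)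
  show "w0 R Sm \<circ> min_rep \<mu> \<circ> w0i Sm ai \<in> W"
    using comp_in_gen_group[OF comp_in_gen_group[OF w0_props(1) wW] w0i_in_W] .
  show "(w0 R Sm \<circ> min_rep \<mu> \<circ> w0i Sm ai) \<omega> = w0 R Sm \<mu>"
    using J_stabilizes_fund_weight[OF w0i_props(1)] w by (simp add: is_min_rep_def)
  fix b assume b: "b \<in> J"
  have bR: "w0i Sm ai b \<in> R" using W_maps_R[OF w0i_in_W simple_in_R] b by blast
  have "b \<in> pos_roots_on J" using b simple_pos coeff_simple by (auto simp: pos_roots_on_def)
  then have "w0i Sm ai b \<notin> P" using w0i_props(2) by (auto simp: inversions_def)
  moreover have "coeff ai (w0i Sm ai b) = 0" using coeff_ai_w0i b coeff_simple by auto
  ultimately have "min_rep \<mu> (w0i Sm ai b) \<notin> P" using is_min_rep_not_pos[OF w bR] by blast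
  then show "(w0 R Sm \<circ> min_rep \<mu> \<circ> w0i Sm ai) b \<in> P"
    using w0_pos_iff W_maps_R[OF wW bR] by simp
qed

lemma ideal_of_w0: assumes m: "\<mu> \<in> \<Lambda>" shows "ideal_of (w0 R Sm \<mu>) = Q - w0i Sm ai ` ideal_of \<mu>"
proof (rule set_eqI)
  fix \<gamma>
  have m': "w0 R Sm \<mu> \<in> \<Lambda>" using weights_W_closed[OF m w0_props(1)] .
  show "\<gamma> \<in> ideal_of (w0 R Sm \<mu>) \<longleftrightarrow> \<gamma> \<in> Q - w0i Sm ai ` ideal_of \<mu>"
  proof (cases "\<gamma> \<in> Q")
    case True
    obtain \<beta> where b: "\<beta> \<in> class_roots" "coroot \<gamma> = \<beta>" using coroot_classE[OF True] by metis
    have uR: "w0i Sm ai \<beta> \<in> R" using W_maps_R[OF w0i_in_W class_roots_in_R[OF b(1)]] .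
    have "coroot (w0i Sm ai \<gamma>) = w0i Sm ai \<beta>"
      using coroot_conj[OF orthogonal_transformation_W[OF w0i_in_W]] b(2) by metis
    then have "w0i Sm ai \<gamma> \<notin> ideal_of \<mu> \<longleftrightarrow> min_rep \<mu> (w0i Sm ai \<beta>) \<in> P"
      using mem_ideal_of[OF m] w0i_coroot_class[OF True] by simp
    also have "\<dots> \<longleftrightarrow> \<gamma> \<in> ideal_of (w0 R Sm \<mu>)"
      using mem_ideal_of[OF m'] min_rep_eqI[OF is_min_rep_w0[OF m]] True b(2)
        w0_pos_iff W_maps_R[OF is_min_rep_min_rep[OF m, unfolded is_min_rep_def, THEN conjunct1] uR]
      by simp
    finally show ?thesis using True w0i_props(3) by (metis Diff_iff image_iff)
  qed (use ideal_of_subset[OF m'] in auto)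
qed

theorem compl_poset_iso_weights_ideals:
  "compl_poset_iso \<Lambda> (root_le Sm) (w0 R Sm)
     (lower_ideals Q (root_le (coroot ` Sm))) (\<subseteq>) (ideal_compl Q (w0i Sm ai))
     (\<lambda>\<mu>. ideal_of (w0 R Sm \<mu>))"
  unfolding compl_poset_iso_def
proof (intro conjI ballI)
  have w0\<Lambda>: "\<mu> \<in> \<Lambda> \<Longrightarrow> w0 R Sm \<mu> \<in> \<Lambda>" for \<mu> using weights_W_closed w0_props(1) by blast
  show "bij_betw (\<lambda>\<mu>. ideal_of (w0 R Sm \<mu>)) \<Lambda> (lower_ideals Q (root_le (coroot ` Sm)))"
  proof (rule bij_betwI')
    show "ideal_of (w0 R Sm x) = ideal_of (w0 R Sm y) \<longleftrightarrow> x = y" if "x \<in> \<Lambda>" "y \<in> \<Lambda>" for x y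
      using ideal_of_inject[OF w0\<Lambda> w0\<Lambda>] that w0_props(3) by metis
    show "ideal_of (w0 R Sm x) \<in> lower_ideals Q (root_le (coroot ` Sm))" if "x \<in> \<Lambda>" for x
      using ideal_of_in_lower_ideals[OF w0\<Lambda>[OF that]] .
    show "\<exists>x\<in>\<Lambda>. I = ideal_of (w0 R Sm x)" if "I \<in> lower_ideals Q (root_le (coroot ` Sm))" for I
      using ideal_of_surj[OF that] w0\<Lambda> w0_props(3) by metis
  qed
  fix x y assume x: "x \<in> \<Lambda>" and y: "y \<in> \<Lambda>"
  show "root_le Sm x y \<longleftrightarrow> ideal_of (w0 R Sm x) \<subseteq> ideal_of (w0 R Sm y)"
    using ideal_of_antimono[OF w0\<Lambda>[OF y] w0\<Lambda>[OF x]] ideal_of_reflects[OF w0\<Lambda>[OF y] w0\<Lambda>[OF x]]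
      w0_reverses_root_le w0_props(3) by metis
next
  fix x assume x: "x \<in> \<Lambda>"
  have "w0i Sm ai ` Q \<subseteq> Q" using w0i_coroot_class by blast
  then have "ideal_compl Q (w0i Sm ai) (ideal_compl Q (w0i Sm ai) (ideal_of x)) = ideal_of x"
    by (rule ideal_compl_ideal_compl[OF _ w0i_props(3) ideal_of_subset[OF x]])
  moreover have "ideal_of (w0 R Sm x) = ideal_compl Q (w0i Sm ai) (ideal_of x)"
    using ideal_of_w0[OF x] by (simp add: ideal_compl_def)
  ultimately have "ideal_compl Q (w0i Sm ai) (ideal_of (w0 R Sm x)) = ideal_of x" by simp
  then show "ideal_of (w0 R Sm (w0 R Sm x)) = ideal_compl Q (w0i Sm ai) (ideal_of (w0 R Sm x))"
    using w0_props(3) by simp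
qed

end

theorem lemma6p3:
  fixes R Sm :: "'a::euclidean_space set" and ai :: 'a
  assumes "root_system R" and "irreducible_rs R" and "is_base R Sm"
    and "ai \<in> Sm" and "minuscule R Sm ai"
  shows "\<exists>f. compl_poset_iso
            (weights_irrep R Sm (fund_weight Sm ai)) (root_le Sm) (w0 R Sm)
            (lower_ideals (coroot_class R Sm ai) (root_le (coroot ` Sm))) (\<subseteq>)
            (ideal_compl (coroot_class R Sm ai) (w0i Sm ai))
            f"
proof -
  interpret minuscule_weight R Sm ai
    using assms by unfold_locales
  show ?thesis using compl_poset_iso_weights_ideals by blast
qed

end
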